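(* Let $a,b>0$, $M\ge 1$ and consider solutions $\mathbf u(t)=(u_x(t))_{x\in\mathbb Z}$ of the mean-field equations with initial values in $[0,1]^{\mathbb Z}$. (i) If expansion occurs, then there are $u,L,x_0,\delta,c>0$ with $u_-<u<u_+$ such that: whenever $u_x(0)\ge u$ for all $|x|\le L$, we have $u_x(t)\ge u+\delta$ for all $t>0$ and all $x$ with $|x|\le ct-x_0$. (ii) If retreat occurs, then there are $u,L,x_0,\delta,c>0$ with $0<u<u_-$ (when $a+b<4$, the requirement $u<u_-$ is dropped) such that: whenever $u_x(0)\le u$ for all $|x|\le L$, we have $u_x(t)\le u-\delta$ for all $t>0$ and all $x$ with $|x|\le ct-x_0$.
   Context: Fix parameters $a,b>0$ and an integer $M\ge 1$ (dispersal range). For $x,y\in\mathbb Z$ write $y\sim x$ iff $0<|x-y|\le M$. The mean-field equations are the system $$u_x'=\Big(a u_x^2+\frac{b}{2M}\sum_{y\sim x}u_y^2\Big)(1-u_x)-u_x,\qquad x\in\mathbb Z,$$ for $\mathbf u(t)=(u_x(t))_{x\in\mathbb Z}$; for every initial value in $[0,1]^{\mathbb Z}$ it has a unique global solution, which stays in $[0,1]^{\mathbb Z}$. Let $r=a+b$. When $r>4$ put $w=(1/4-1/r)^{1/2}$, $u_-=1/2-w$, $u_+=1/2+w$ (the nonzero zeros of $ru^2(1-u)-u$); when $r=4$ put $u_-=u_+=1/2$. Expansion (defined for $r>4$): there is $u$ with $u_-<u<u_+$ such that the solution with $u_x(0)=u\,\mathbf 1(x\le 0)$ satisfies $u_1(t_0)=u$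 for some $t_0>0$. Retreat (for $r\ge4$): there are $u_*,u^*$ with $0<u_*<u_-\le u_+<u^*\le 1$ such that the solution with $u_x(0)=u^*\mathbf 1(x<0)+u_*\mathbf 1(x\ge 0)$ satisfies $u_{-1}(t_0)=u_*$ for some $t_0>0$. By convention, retreat is also said to occur whenever $r<4$. *)

theory Defs
  imports Complex_Main
begin

definition nbrs :: "nat \<Rightarrow> int \<Rightarrow> int set" where
  "nbrs M x = {x - int M .. x + int M} - {x}"

definition mf_rhs :: "real \<Rightarrow> real \<Rightarrow> nat \<Rightarrow> (int \<Rightarrow> real) \<Rightarrow> int \<Rightarrow> real" where
  "mf_rhs a b M v x =
     (a * (v x)\<^sup>2 + b / (2 * real M) * (\<Sum>y\<in>nbrs M x. (v y)\<^sup>2)) * (1 - v x) - v x"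

definition mf_solution :: "real \<Rightarrow> real \<Rightarrow> nat \<Rightarrow> (real \<Rightarrow> int \<Rightarrow> real) \<Rightarrow> bool" where
  "mf_solution a b M u \<longleftrightarrow>
     (\<forall>t\<ge>0. \<forall>x. 0 \<le> u t x \<and> u t x \<le> 1) \<and>
     (\<forall>x. \<forall>t\<ge>0. ((\<lambda>s. u s x) has_real_derivative mf_rhs a b M (u t) x) (at t within {0..}))"

definition u_minus :: "real \<Rightarrow> real" where
  "u_minus r = 1/2 - sqrt (1/4 - 1/r)"

definition u_plus :: "real \<Rightarrow> real" where
  "u_plus r = 1/2 + sqrt (1/4 - 1/r)"

definition expansion :: "real \<Rightarrow> real \<Rightarrow> nat \<Rightarrow> bool" where
  "expansion a b M \<longleftrightarrow> a + b > 4 \<and>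
     (\<exists>u. u_minus (a+b) < u \<and> u < u_plus (a+b) \<and>
        (\<exists>sol. mf_solution a b M sol \<and> (\<forall>x. sol 0 x = (if x \<le> 0 then u else 0)) \<and>
               (\<exists>t0>0. sol t0 1 = u)))"

definition retreat :: "real \<Rightarrow> real \<Rightarrow> nat \<Rightarrow> bool" where
  "retreat a b M \<longleftrightarrow> a + b < 4 \<or>
     (a + b \<ge> 4 \<and>
      (\<exists>us uS. 0 < us \<and> us < u_minus (a+b) \<and> u_minus (a+b) \<le> u_plus (a+b) \<and>
          u_plus (a+b) < uS \<and> uS \<le> 1 \<and>
        (\<exists>sol. mf_solution a b M sol \<and> (\<forall>x. sol 0 x = (if x < 0 then uS else us)) \<and>
               (\<exists>t0>0. sol t0 (-1) = us))))"

end

theory Submission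
  imports Defs "HOL-Analysis.Analysis"
begin

text \<open>
  Everything rests on a comparison principle: a subsolution lying below a supersolution up to
  an error \<open>h\<close> at time 0 stays below it up to \<open>e\<^sup>\<rho>\<^sup>t h\<close>, for every weight \<open>h\<close> whose values at
  neighbouring sites differ at most by the factor \<open>e\<^sup>M\<close>. With exponential weights it localises
  the behaviour of spatially constant sub- and supersolutions to plateaus, and it transports the
  front from the expansion (retreat) hypothesis into any plateau: in one period \<open>t\<^sub>0\<close> a plateau at
  level \<open>u\<close> gains a site while its defect grows by a bounded factor. Finitely many such front steps,
  followed by a step in which the reaction term restores the level, widen the plateau by one site
  in bounded time; this is spreading at linear speed. For retreat the front comparison needs a
  global bound, supplied by the fact that all solutions drop below any level above \<open>u\<^sub>+\<close> in bounded
  time; for \<open>a + b < 4\<close> all solutions even fall below \<open>1/4\<close> uniformly.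
\<close>

section \<open>Symmetries of the mean-field equations\<close>

lemma nbrs_shift: "nbrs M (x + k) = (\<lambda>y. y + k) ` nbrs M x"
proof -
  have "(\<lambda>y. y + k) ` nbrs M x = {z. \<exists>y. z = y + k \<and> y \<in> nbrs M x}" by auto
  also have "\<dots> = nbrs M (x + k)"
    unfolding nbrs_def by (auto intro: exI[of _ "_ - k"])
  finally show ?thesis by simp
qed

lemma nbrs_reflect: "nbrs M (- x) = uminus ` nbrs M x"
proof -
  have "uminus ` nbrs M x = {z. \<exists>y. z = - y \<and> y \<in> nbrs M x}" by auto
  also have "\<dots> = nbrs M (- x)"
    unfolding nbrs_def by (auto intro: exI[of _ "- _"])
  finally show ?thesis by simp
qed

lemma card_nbrs: "card (nbrs M x) = 2 * M"
  unfolding nbrs_def by (simp add: card_Diff_singleton)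

lemma dist_nbrs: "y \<in> nbrs M x \<Longrightarrow> \<bar>y - x\<bar> \<le> int M"
  unfolding nbrs_def by auto

lemma mf_rhs_shift: "mf_rhs a b M (\<lambda>y. v (y + k)) x = mf_rhs a b M v (x + k)"
proof -
  have "(\<Sum>y\<in>nbrs M (x + k). (v y)\<^sup>2) = (\<Sum>y\<in>nbrs M x. (v (y + k))\<^sup>2)"
    unfolding nbrs_shift by (subst sum.reindex) (auto simp: inj_on_def)
  then show ?thesis unfolding mf_rhs_def by simp
qed

lemma mf_rhs_reflect: "mf_rhs a b M (\<lambda>y. v (- y)) x = mf_rhs a b M v (- x)"
proof -
  have "(\<Sum>y\<in>nbrs M (- x). (v y)\<^sup>2) = (\<Sum>y\<in>nbrs M x. (v (- y))\<^sup>2)"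
    unfolding nbrs_reflect by (subst sum.reindex) (auto simp: inj_on_def)
  then show ?thesis unfolding mf_rhs_def by simp
qed

lemma mf_solution_bounds: "mf_solution a b M v \<Longrightarrow> 0 \<le> t \<Longrightarrow> 0 \<le> v t x \<and> v t x \<le> 1"
  unfolding mf_solution_def by auto

lemma mf_solution_shift: "mf_solution a b M v \<Longrightarrow> mf_solution a b M (\<lambda>t x. v t (x + k))"
  unfolding mf_solution_def by (simp add: mf_rhs_shift)

lemma mf_solution_reflect: "mf_solution a b M v \<Longrightarrow> mf_solution a b M (\<lambda>t x. v t (- x))"
  unfolding mf_solution_def by (simp add: mf_rhs_reflect)

lemma mf_solution_time_shift:
  assumes sol: "mf_solution a b M v" and s: "0 \<le> s"
  shows "mf_solution a b M (\<lambda>t x. v (s + t) x)"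
  unfolding mf_solution_def
proof (intro conjI allI impI)
  fix t :: real and x assume t: "0 \<le> t"
  then show "0 \<le> v (s + t) x" "v (s + t) x \<le> 1" using mf_solution_bounds[OF sol] s by auto
  have "((\<lambda>t. v t x) has_real_derivative mf_rhs a b M (v (s + t)) x) (at (s + t) within {0..})"
    using sol s t unfolding mf_solution_def by auto
  then have "((\<lambda>t. v t x) has_real_derivative mf_rhs a b M (v (s + t)) x) (at (s + t) within (+) s ` {0..})"
    by (rule has_field_derivative_subset) (use s in auto)
  moreover have "((+) s has_real_derivative 1) (at t within {0..})"
    by (auto intro!: derivative_eq_intros)
  ultimately have "((\<lambda>t. v t x) \<circ> (+) s has_real_derivative mf_rhs a b M (v (s + t)) x * 1) (at t within {0..})"
    by (rule DERIV_image_chain)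
  then
  show "((\<lambda>t. v (s + t) x) has_real_derivative mf_rhs a b M (v (s + t)) x) (at t within {0..})"
    by (simp add: o_def)
qed

section \<open>The reaction term\<close>

definition mf_reaction :: "real \<Rightarrow> real \<Rightarrow> real" where
  "mf_reaction r s = r * s\<^sup>2 * (1 - s) - s"

lemma mf_rhs_const:
  assumes "M \<ge> 1"
  shows "mf_rhs a b M (\<lambda>y. s) x = mf_reaction (a + b) s"
  using assms unfolding mf_rhs_def mf_reaction_def by (simp add: card_nbrs field_simps)

lemma u_minus_u_plus:
  assumes "r \<ge> 4"
  shows "0 < u_minus r" "u_minus r \<le> u_plus r" "u_plus r < 1"
proof -
  have "1/r \<le> 1/4" "0 < 1/r" using assms by (simp_all add: field_simps)
  then have "sqrt (1/4 - 1/r) < sqrt (1/4)" by (simp add: real_sqrt_less_iff)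
  also have "sqrt (1/4) = (1/2::real)" by (simp add: real_sqrt_divide)
  finally show "0 < u_minus r" "u_minus r \<le> u_plus r" "u_plus r < 1"
    unfolding u_minus_def u_plus_def using \<open>1/r \<le> 1/4\<close> by auto
qed

lemma mf_reaction_factor:
  assumes "r \<ge> 4"
  shows "mf_reaction r s = r * s * (s - u_minus r) * (u_plus r - s)"
proof -
  define w where "w = sqrt (1/4 - 1/r)"
  have "w\<^sup>2 = 1/4 - 1/r" unfolding w_def using assms by (simp add: field_simps)
  have "(s - (1/2 - w)) * ((1/2 + w) - s) = w\<^sup>2 - (s - 1/2)\<^sup>2"
    by (simp add: power2_eq_square field_simps)
  also have "\<dots> = s - s\<^sup>2 - 1/r" using \<open>w\<^sup>2 = 1/4 - 1/r\<close> by (simp add: power2_eq_square algebra_simps)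
  finally have "r * s * ((s - (1/2 - w)) * ((1/2 + w) - s)) = r * s * (s - s\<^sup>2 - 1/r)" by simp
  also have "\<dots> = mf_reaction r s"
    using assms unfolding mf_reaction_def by (simp add: power2_eq_square field_simps)
  finally show ?thesis unfolding u_minus_def u_plus_def w_def by (simp add: mult.assoc)
qed

lemma mult_mono3:
  fixes x y z X Y Z :: real
  assumes "0 \<le> x" "x \<le> X" "0 \<le> y" "y \<le> Y" "0 \<le> z" "z \<le> Z"
  shows "x * y * z \<le> X * Y * Z"
  using assms by (intro mult_mono) (auto intro: mult_nonneg_nonneg order_trans)

lemma mf_reaction_ge_between:
  assumes r: "r \<ge> 4" and "u_minus r \<le> lo" "lo \<le> s" "s \<le> hi" "hi \<le> u_plus r"
  shows "r * (lo * (lo - u_minus r) * (u_plus r - hi)) \<le> mf_reaction r s"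
proof -
  have "lo * (lo - u_minus r) * (u_plus r - hi) \<le> s * (s - u_minus r) * (u_plus r - s)"
    using assms u_minus_u_plus[OF r] by (intro mult_mono3) auto
  then show ?thesis using r mf_reaction_factor[OF r] by (simp add: mult.assoc)
qed

lemma mf_reaction_le_below:
  assumes r: "r \<ge> 4" and "0 \<le> lo" "lo \<le> s" "s \<le> hi" "hi \<le> u_minus r"
  shows "mf_reaction r s \<le> - (r * (lo * (u_minus r - hi) * (u_plus r - hi)))"
proof -
  have "lo * (u_minus r - hi) * (u_plus r - hi) \<le> s * (u_minus r - s) * (u_plus r - s)"
    using assms u_minus_u_plus[OF r] by (intro mult_mono3) auto
  then have "r * (lo * (u_minus r - hi) * (u_plus r - hi)) \<le> r * (s * (u_minus r - s) * (u_plus r - s))"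
    using r by (intro mult_left_mono) auto
  then show ?thesis using mf_reaction_factor[OF r, of s] by (simp add: algebra_simps)
qed

lemma mf_reaction_le_above:
  assumes r: "r \<ge> 4" and "u_plus r \<le> lo" "lo \<le> s"
  shows "mf_reaction r s \<le> - (r * (lo * (lo - u_minus r) * (lo - u_plus r)))"
proof -
  have "lo * (lo - u_minus r) * (lo - u_plus r) \<le> s * (s - u_minus r) * (s - u_plus r)"
    using assms u_minus_u_plus[OF r] by (intro mult_mono3) auto
  then have "r * (lo * (lo - u_minus r) * (lo - u_plus r)) \<le> r * (s * (s - u_minus r) * (s - u_plus r))"
    using r by (intro mult_left_mono) auto
  then show ?thesis using mf_reaction_factor[OF r, of s] by (simp add: algebra_simps)
qed

lemma mf_reaction_le_subcritical:
  assumes "0 \<le> r" "0 \<le> s"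
  shows "mf_reaction r s \<le> - (s * (1 - r / 4))"
proof -
  have "s * (1 - s) \<le> 1/4" using zero_le_power2[of "s - 1/2"] by (simp add: power2_eq_square algebra_simps)
  then have "s * (r * (s * (1 - s))) \<le> s * (r / 4)"
    using assms by (intro mult_left_mono) (auto simp: mult_left_mono[of _ "1/4" r, simplified])
  then show ?thesis unfolding mf_reaction_def by (simp add: power2_eq_square algebra_simps)
qed

section \<open>Sub- and supersolutions\<close>

definition mf_subsolution :: "real \<Rightarrow> real \<Rightarrow> nat \<Rightarrow> real \<Rightarrow> (real \<Rightarrow> int \<Rightarrow> real) \<Rightarrow> bool" where
  "mf_subsolution a b M T w \<longleftrightarrow>
     (\<forall>t\<in>{0..T}. \<forall>x. 0 \<le> w t x \<and> w t x \<le> 1 \<and>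
        (\<exists>D. ((\<lambda>s. w s x) has_real_derivative D) (at t within {0..}) \<and> D \<le> mf_rhs a b M (w t) x))"

definition mf_supersolution :: "real \<Rightarrow> real \<Rightarrow> nat \<Rightarrow> real \<Rightarrow> (real \<Rightarrow> int \<Rightarrow> real) \<Rightarrow> bool" where
  "mf_supersolution a b M T w \<longleftrightarrow>
     (\<forall>t\<in>{0..T}. \<forall>x. 0 \<le> w t x \<and> w t x \<le> 1 \<and>
        (\<exists>D. ((\<lambda>s. w s x) has_real_derivative D) (at t within {0..}) \<and> mf_rhs a b M (w t) x \<le> D))"

lemma mf_solution_imp_subsolution: "mf_solution a b M v \<Longrightarrow> mf_subsolution a b M T v"
  unfolding mf_solution_def mf_subsolution_def by fastforce

lemma mf_solution_imp_supersolution: "mf_solution a b M v \<Longrightarrow> mf_supersolution a b M T v"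
  unfolding mf_solution_def mf_supersolution_def by fastforce

lemma mf_subsolution_linear:
  assumes "M \<ge> 1" and "\<forall>t\<in>{0..T}. 0 \<le> \<alpha> + \<gamma> * t \<and> \<alpha> + \<gamma> * t \<le> 1 \<and> \<gamma> \<le> mf_reaction (a + b) (\<alpha> + \<gamma> * t)"
  shows "mf_subsolution a b M T (\<lambda>t x. \<alpha> + \<gamma> * t)"
  unfolding mf_subsolution_def using assms
  by (auto simp: mf_rhs_const intro!: exI[of _ \<gamma>] derivative_eq_intros)

lemma mf_supersolution_linear:
  assumes "M \<ge> 1" and "\<forall>t\<in>{0..T}. 0 \<le> \<alpha> + \<gamma> * t \<and> \<alpha> + \<gamma> * t \<le> 1 \<and> mf_reaction (a + b) (\<alpha> + \<gamma> * t) \<le> \<gamma>"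
  shows "mf_supersolution a b M T (\<lambda>t x. \<alpha> + \<gamma> * t)"
  unfolding mf_supersolution_def using assms
  by (auto simp: mf_rhs_const intro!: exI[of _ \<gamma>] derivative_eq_intros)

lemma mf_subsolution_const:
  assumes "M \<ge> 1" "0 \<le> \<alpha>" "\<alpha> \<le> 1" "0 \<le> mf_reaction (a + b) \<alpha>"
  shows "mf_subsolution a b M T (\<lambda>t x. \<alpha>)"
  using mf_subsolution_linear[of M T \<alpha> 0] assms by simp

lemma mf_supersolution_const:
  assumes "M \<ge> 1" "0 \<le> \<alpha>" "\<alpha> \<le> 1" "mf_reaction (a + b) \<alpha> \<le> 0"
  shows "mf_supersolution a b M T (\<lambda>t x. \<alpha>)"
  using mf_supersolution_linear[of M T \<alpha> 0] assms by simp

lemma mf_subsolution_rising: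
  assumes "M \<ge> 1" "0 \<le> \<alpha>" "0 \<le> \<gamma>" "\<alpha> + \<gamma> * T \<le> 1"
    and "\<forall>s\<in>{\<alpha>..\<alpha> + \<gamma> * T}. \<gamma> \<le> mf_reaction (a + b) s"
  shows "mf_subsolution a b M T (\<lambda>t x. \<alpha> + \<gamma> * t)"
proof (rule mf_subsolution_linear[OF assms(1)], intro ballI)
  fix t assume "t \<in> {0..T}"
  then have "\<alpha> \<le> \<alpha> + \<gamma> * t" "\<alpha> + \<gamma> * t \<le> \<alpha> + \<gamma> * T"
    using assms(3) by (auto intro: mult_left_mono)
  then show "0 \<le> \<alpha> + \<gamma> * t \<and> \<alpha> + \<gamma> * t \<le> 1 \<and> \<gamma> \<le> mf_reaction (a + b) (\<alpha> + \<gamma> * t)"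
    using assms(2,4,5) by auto
qed

lemma mf_supersolution_falling:
  assumes "M \<ge> 1" "0 \<le> \<gamma>" "0 \<le> \<alpha> - \<gamma> * T" "\<alpha> \<le> 1"
    and "\<forall>s\<in>{\<alpha> - \<gamma> * T..\<alpha>}. mf_reaction (a + b) s \<le> - \<gamma>"
  shows "mf_supersolution a b M T (\<lambda>t x. \<alpha> - \<gamma> * t)"
proof -
  have "mf_supersolution a b M T (\<lambda>t x. \<alpha> + (- \<gamma>) * t)"
  proof (rule mf_supersolution_linear[OF assms(1)], intro ballI)
    fix t assume "t \<in> {0..T}"
    then have "\<alpha> - \<gamma> * T \<le> \<alpha> - \<gamma> * t" "\<alpha> - \<gamma> * t \<le> \<alpha>"
      using assms(2) by (auto intro: mult_left_mono)
    then show "0 \<le> \<alpha> + - \<gamma> * t \<and> \<alpha> + - \<gamma> * t \<le> 1 \<and> mf_reaction (a + b) (\<alpha> + - \<gamma> * t) \<le> - \<gamma>"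
      using assms(3-5) by auto
  qed
  then show ?thesis by simp
qed

lemma continuous_on_if_has_derivatives:
  assumes "\<forall>t\<in>{0..T}. \<exists>D. (f has_real_derivative D) (at t within {0..})"
  shows "continuous_on {0..T} f"
  unfolding continuous_on_eq_continuous_within
  using assms by (metis DERIV_continuous atLeastAtMost_iff atLeast_iff continuous_within_subset subsetI)

lemma mf_subsolution_continuous: "mf_subsolution a b M T w \<Longrightarrow> continuous_on {0..T} (\<lambda>t. w t x)"
  unfolding mf_subsolution_def by (rule continuous_on_if_has_derivatives) blast

lemma mf_supersolution_continuous: "mf_supersolution a b M T w \<Longrightarrow> continuous_on {0..T} (\<lambda>t. w t x)"
  unfolding mf_supersolution_def by (rule continuous_on_if_has_derivatives) blast

section \<open>The comparison principle\<close>

lemma cubic_increment_le: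
  fixes p q :: real
  assumes "0 \<le> p" "p \<le> q" "q \<le> 1"
  shows "q\<^sup>2 * (1 - q) - p\<^sup>2 * (1 - p) \<le> q - p"
proof -
  have "q\<^sup>2 * (1 - q) - p\<^sup>2 * (1 - p) = (q - p) * (q + p - q\<^sup>2 - q * p - p\<^sup>2)"
    by (simp add: power2_eq_square algebra_simps)
  also have "\<dots> \<le> (q - p) * 1"
  proof (rule mult_left_mono)
    have "(q - 1/2)\<^sup>2 \<ge> 0" "(p - 1/2)\<^sup>2 \<ge> 0" "q * p \<ge> 0" using assms by auto
    then show "q + p - q\<^sup>2 - q * p - p\<^sup>2 \<le> 1" by (simp add: power2_eq_square algebra_simps)
  qed (use assms in auto)
  finally show ?thesis by simp
qed

lemma square_increment_le:
  fixes p q E :: real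
  assumes "0 \<le> p" "0 \<le> q" "p \<le> 1" "q \<le> 1" "p - q \<le> E" "0 \<le> E"
  shows "p\<^sup>2 - q\<^sup>2 \<le> 2 * E"
proof (cases "p \<le> q")
  case True
  then have "p\<^sup>2 \<le> q\<^sup>2" using assms by (intro power_mono) auto
  then show ?thesis using assms by linarith
next
  case False
  have "p\<^sup>2 - q\<^sup>2 = (p - q) * (p + q)" by (simp add: power2_eq_square algebra_simps)
  also have "\<dots> \<le> (p - q) * 2" using False assms by (intro mult_left_mono) auto
  finally show ?thesis using assms by (simp add: algebra_simps)
qed

text \<open>One-sided Lipschitz bound: it only needs the increment to be bounded above at the
  neighbours, which is all a first touching point provides.\<close>
lemma mf_rhs_increment_le:
  fixes v w :: "int \<Rightarrow> real"
  assumes ab: "0 \<le> a" "0 \<le> b" "M \<ge> 1"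
    and v: "\<forall>y. 0 \<le> v y \<and> v y \<le> 1" and w: "\<forall>y. 0 \<le> w y \<and> w y \<le> 1"
    and own: "w x \<le> v x" "v x - w x \<le> E" and nbrs: "\<forall>y\<in>nbrs M x. v y - w y \<le> E"
  shows "mf_rhs a b M v x - mf_rhs a b M w x \<le> (a + 1 + 2 * b) * E"
proof -
  define Sv where "Sv = (\<Sum>y\<in>nbrs M x. (v y)\<^sup>2)"
  define Sw where "Sw = (\<Sum>y\<in>nbrs M x. (w y)\<^sup>2)"
  define k where "k = b / (2 * real M)"
  have k: "0 \<le> k" "k * (2 * real M) = b" using ab by (auto simp: k_def)
  have E: "0 \<le> E" using own by linarith
  have "Sv - Sw = (\<Sum>y\<in>nbrs M x. (v y)\<^sup>2 - (w y)\<^sup>2)"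
    unfolding Sv_def Sw_def by (simp add: sum_subtractf)
  also have "\<dots> \<le> (\<Sum>y\<in>nbrs M x. 2 * E)"
    using v w nbrs E by (intro sum_mono square_increment_le) auto
  finally have S: "Sv - Sw \<le> 2 * E * (2 * real M)" by (simp add: card_nbrs algebra_simps)
  have cubic: "a * ((v x)\<^sup>2 * (1 - v x) - (w x)\<^sup>2 * (1 - w x)) \<le> a * E"
    using cubic_increment_le[of "w x" "v x"] v w own ab by (intro mult_left_mono) auto
  have "Sv * (1 - v x) - Sw * (1 - w x) = (Sv - Sw) * (1 - v x) - Sw * (v x - w x)"
    by (simp add: algebra_simps)
  also have "\<dots> \<le> (Sv - Sw) * (1 - v x)"
    using own by (simp add: Sw_def sum_nonneg)
  also have "\<dots> \<le> 2 * E * (2 * real M)"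
  proof (cases "Sv - Sw \<ge> 0")
    case True
    then have "(Sv - Sw) * (1 - v x) \<le> Sv - Sw" using v by (simp add: mult_left_le)
    then show ?thesis using S by linarith
  next
    case False
    then have "(Sv - Sw) * (1 - v x) \<le> 0" using v by (simp add: mult_nonpos_nonneg)
    moreover have "0 \<le> 2 * E * (2 * real M)" using E by simp
    ultimately show ?thesis by linarith
  qed
  finally have "k * (Sv * (1 - v x) - Sw * (1 - w x)) \<le> k * (2 * E * (2 * real M))"
    using k by (intro mult_left_mono) auto
  also have "\<dots> = 2 * b * E" using k(2) by (simp add: algebra_simps)
  finally have nonlocal: "k * (Sv * (1 - v x) - Sw * (1 - w x)) \<le> 2 * b * E" .
  have "mf_rhs a b M v x - mf_rhs a b M w x
      = a * ((v x)\<^sup>2 * (1 - v x) - (w x)\<^sup>2 * (1 - w x)) + k * (Sv * (1 - v x) - Sw * (1 - w x))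
        - (v x - w x)"
    unfolding mf_rhs_def Sv_def[symmetric] Sw_def[symmetric] k_def[symmetric] by (simp add: algebra_simps)
  then show ?thesis using cubic nonlocal own by (simp add: algebra_simps)
qed

definition mf_weight :: "nat \<Rightarrow> (int \<Rightarrow> real) \<Rightarrow> bool" where
  "mf_weight M h \<longleftrightarrow> (\<forall>x. 0 \<le> h x) \<and> (\<forall>x. \<forall>y\<in>nbrs M x. h y \<le> exp (real M) * h x)"

lemma mf_weight_add: "mf_weight M g \<Longrightarrow> mf_weight M h \<Longrightarrow> mf_weight M (\<lambda>x. g x + h x)"
  unfolding mf_weight_def by (fastforce simp: distrib_left intro: add_mono)

lemma mf_weight_scale: "0 \<le> c \<Longrightarrow> mf_weight M h \<Longrightarrow> mf_weight M (\<lambda>x. c * h x)"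
  unfolding mf_weight_def by (metis mult_left_mono mult.left_commute zero_le_mult_iff)

lemma mf_weight_const: "0 \<le> c \<Longrightarrow> mf_weight M (\<lambda>x. c)"
  unfolding mf_weight_def by (simp add: mult_le_cancel_right1)

lemma mf_weight_exp_right: "mf_weight M (\<lambda>x. exp (real_of_int x - c))"
  unfolding mf_weight_def
  by (auto simp: exp_add[symmetric] dest!: dist_nbrs)

lemma mf_weight_exp_left: "mf_weight M (\<lambda>x. exp (- real_of_int x - c))"
  unfolding mf_weight_def
  by (auto simp: exp_add[symmetric] dest!: dist_nbrs)

definition window_weight :: "int \<Rightarrow> int \<Rightarrow> real" where
  "window_weight K x = exp (real_of_int x - K) + exp (- real_of_int x - K)"

lemma mf_weight_window: "mf_weight M (window_weight K)"
  unfolding window_weight_def by (intro mf_weight_add mf_weight_exp_right mf_weight_exp_left)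

lemma window_weight_ge: "exp (\<bar>real_of_int x\<bar> - K) \<le> window_weight K x"
proof (cases "x \<ge> 0")
  case True
  then show ?thesis unfolding window_weight_def by (simp add: add_increasing2)
next
  case False
  then show ?thesis unfolding window_weight_def by (simp add: add_increasing)
qed

lemma window_weight_ge_one:
  assumes "K < \<bar>x\<bar>"
  shows "1 \<le> window_weight K x"
proof -
  have "1 \<le> exp (\<bar>real_of_int x\<bar> - K)" using assms by simp
  then show ?thesis using window_weight_ge[of x K] by linarith
qed

lemma window_weight_le:
  assumes "\<bar>x\<bar> \<le> K - R"
  shows "window_weight K x \<le> 2 * exp (- real_of_int R)"
proof -
  have "exp (real_of_int x - K) \<le> exp (- real_of_int R)" "exp (- real_of_int x - K) \<le> exp (- real_of_int R)"
    using assms by simp_all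
  then show ?thesis unfolding window_weight_def by linarith
qed

lemma derivative_nonpos_at_first_zero:
  fixes g :: "real \<Rightarrow> real"
  assumes "(g has_real_derivative D) (at t within {0..})" "0 < t" "g t = 0"
    and "\<forall>s\<in>{0..<t}. g s > 0"
  shows "D \<le> 0"
proof (rule ccontr)
  assume "\<not> D \<le> 0"
  then obtain d where d: "d > 0" "\<forall>h>0. t - h \<in> {0..} \<longrightarrow> h < d \<longrightarrow> g (t - h) < g t"
    using has_real_derivative_pos_inc_left[OF assms(1)] by force
  define h where "h = min d t / 2"
  have h: "h > 0" "h < d" "h < t" using d assms(2) by (auto simp: h_def)
  then have "g (t - h) < 0" using d assms(3) by auto
  moreover have "g (t - h) > 0" using assms(4) h by auto
  ultimately show False by simp
qed

text \<open>The first touching time is the infimum of a closed set, because only the finitely many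
  sites with \<open>\<bar>x\<bar> \<le> R\<close> can touch.\<close>
lemma strict_order_persists:
  fixes lo hi :: "real \<Rightarrow> int \<Rightarrow> real" and R :: int
  assumes cont_lo: "\<forall>x. continuous_on {0..T} (\<lambda>t. lo t x)"
    and cont_hi: "\<forall>x. continuous_on {0..T} (\<lambda>t. hi t x)"
    and init: "\<forall>x. lo 0 x < hi 0 x"
    and far: "\<forall>t\<in>{0..T}. \<forall>x. R < \<bar>x\<bar> \<longrightarrow> lo t x < hi t x"
    and no_first_touch: "\<forall>t\<in>{0<..T}. \<forall>x. (\<forall>y. lo t y \<le> hi t y) \<longrightarrow> lo t x = hi t x \<longrightarrow>
                 (\<forall>s\<in>{0..<t}. lo s x < hi s x) \<longrightarrow> False"
  shows "\<forall>t\<in>{0..T}. \<forall>x. lo t x < hi t x"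
proof (rule ccontr)
  assume neg: "\<not> ?thesis"
  define S where "S x = {0..T} \<inter> (\<lambda>t. hi t x - lo t x) -` {..0}" for x
  define B where "B = (\<Union>x\<in>{-R..R}. S x)"
  have "closed (S x)" for x
    unfolding S_def by (rule continuous_closed_preimage)
      (use cont_lo cont_hi in \<open>auto intro: continuous_on_diff\<close>)
  then have "closed B" unfolding B_def by (intro closed_UN) auto
  have B_iff: "t \<in> B \<longleftrightarrow> t \<in> {0..T} \<and> (\<exists>x. hi t x \<le> lo t x)" for t
  proof
    assume "t \<in> {0..T} \<and> (\<exists>x. hi t x \<le> lo t x)"
    then obtain x where "t \<in> {0..T}" "hi t x \<le> lo t x" by auto
    moreover from this have "\<bar>x\<bar> \<le> R" using far by (meson leD not_le)
    ultimately show "t \<in> B" unfolding B_def S_def by (intro UN_I[of x]) auto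
  qed (auto simp: B_def S_def)
  have "B \<noteq> {}" using neg B_iff by (auto simp: not_less)
  moreover have "bdd_below B" unfolding B_def S_def by (auto intro!: bdd_belowI[of _ 0])
  ultimately have "Inf B \<in> B" using \<open>closed B\<close> closed_contains_Inf by blast
  define t where "t = Inf B"
  obtain x where x: "hi t x \<le> lo t x" and t: "t \<in> {0..T}" using B_iff \<open>Inf B \<in> B\<close> t_def by auto
  have before: "lo s y < hi s y" if "s \<in> {0..<t}" for s y
  proof (rule ccontr)
    assume "\<not> lo s y < hi s y"
    then have "s \<in> B" using B_iff that t by (auto simp: not_less)
    then show False using that \<open>bdd_below B\<close> cInf_lower unfolding t_def by force
  qed
  have "t > 0" using x init t by (metis atLeastAtMost_iff leD order_less_le)
  have at: "lo t y \<le> hi t y" for y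
  proof -
    define C where "C = {0..t} \<inter> (\<lambda>s. hi s y - lo s y) -` {0..}"
    have "continuous_on {0..t} (\<lambda>s. hi s y)" "continuous_on {0..t} (\<lambda>s. lo s y)"
      using cont_lo cont_hi t by (auto intro: continuous_on_subset)
    then have "closed C" unfolding C_def
      by (intro continuous_closed_preimage continuous_on_diff) auto
    moreover have "{0..<t} \<subseteq> C" unfolding C_def using before by (auto simp: less_imp_le)
    ultimately have "closure {0..<t} \<subseteq> C" by (simp add: closure_minimal)
    then have "t \<in> C" using \<open>t > 0\<close> by auto
    then show ?thesis unfolding C_def by auto
  qed
  have "lo t x = hi t x" using at[of x] x by simp
  moreover have "t \<in> {0<..T}" using t \<open>t > 0\<close> by auto
  ultimately show False using no_first_touch at before by blast
qed

text \<open>\<open>a + 1 + 2 b\<close> is the one-sided Lipschitz constant of \<open>mf_rhs\<close> and \<open>e\<^sup>M\<close> the neighbour ratio of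
  admissible weights; any larger rate would do.\<close>
definition comparison_rate :: "real \<Rightarrow> real \<Rightarrow> nat \<Rightarrow> real" where
  "comparison_rate a b M = (a + 1 + 2 * b) * exp (real M) + 1"

lemma comparison_rate_pos: "0 \<le> a \<Longrightarrow> 0 \<le> b \<Longrightarrow> 0 < comparison_rate a b M"
  unfolding comparison_rate_def by (simp add: add_pos_nonneg)

text \<open>At a first touching point the gap \<open>hi + e\<^sup>\<rho>\<^sup>t h - lo\<close> cannot decrease, but the weight term
  grows at rate \<open>\<rho>\<close>, faster than the one-sided Lipschitz bound lets \<open>lo\<close> gain on \<open>hi\<close>.\<close>
lemma mf_no_first_touch:
  assumes ab: "0 \<le> a" "0 \<le> b" "M \<ge> 1"
    and lo: "mf_subsolution a b M T lo" and hi: "mf_supersolution a b M T hi"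
    and h: "mf_weight M h" and hx: "0 < h x" and t: "t \<in> {0<..T}"
    and below: "\<forall>y. lo t y \<le> hi t y + exp (comparison_rate a b M * t) * h y"
    and touch: "lo t x = hi t x + exp (comparison_rate a b M * t) * h x"
    and before: "\<forall>s\<in>{0..<t}. lo s x < hi s x + exp (comparison_rate a b M * s) * h x"
  shows False
proof -
  define \<rho> where "\<rho> = comparison_rate a b M"
  have \<rho>: "(a + 1 + 2 * b) * exp (real M) < \<rho>"
    unfolding \<rho>_def comparison_rate_def by simp
  have tT: "t \<in> {0..T}" using t by auto
  obtain Dlo where Dlo: "((\<lambda>s. lo s x) has_real_derivative Dlo) (at t within {0..})"
    "Dlo \<le> mf_rhs a b M (lo t) x"
    using lo tT unfolding mf_subsolution_def by blast
  obtain Dhi where Dhi: "((\<lambda>s. hi s x) has_real_derivative Dhi) (at t within {0..})"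
    "mf_rhs a b M (hi t) x \<le> Dhi"
    using hi tT unfolding mf_supersolution_def by blast
  have "((\<lambda>s. hi s x + exp (\<rho> * s) * h x - lo s x) has_real_derivative Dhi + \<rho> * exp (\<rho> * t) * h x - Dlo)
          (at t within {0..})"
    using Dlo(1) Dhi(1) by (auto intro!: derivative_eq_intros)
  then have D: "Dhi + \<rho> * exp (\<rho> * t) * h x - Dlo \<le> 0"
    by (rule derivative_nonpos_at_first_zero) (use t touch before in \<open>auto simp: \<rho>_def\<close>)
  define E where "E = exp (\<rho> * t) * (exp (real M) * h x)"
  have gap: "lo t x - hi t x = exp (\<rho> * t) * h x" using touch unfolding \<rho>_def by simp
  have "hi t x \<le> lo t x" using gap mult_pos_pos[OF exp_gt_zero hx, of "\<rho> * t"] by linarith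
  moreover have "exp (\<rho> * t) * h x \<le> E"
    unfolding E_def using hx by simp
  moreover have "\<forall>y\<in>nbrs M x. lo t y - hi t y \<le> E"
  proof
    fix y assume "y \<in> nbrs M x"
    have "lo t y - hi t y \<le> exp (\<rho> * t) * h y" using spec[OF below, of y] unfolding \<rho>_def by simp
    also have "\<dots> \<le> E" unfolding E_def using h \<open>y \<in> nbrs M x\<close> by (auto simp: mf_weight_def)
    finally show "lo t y - hi t y \<le> E" .
  qed
  moreover have "\<forall>y. 0 \<le> lo t y \<and> lo t y \<le> 1" "\<forall>y. 0 \<le> hi t y \<and> hi t y \<le> 1"
    using lo hi tT unfolding mf_subsolution_def mf_supersolution_def by auto
  ultimately have "mf_rhs a b M (lo t) x - mf_rhs a b M (hi t) x \<le> (a + 1 + 2 * b) * E"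
    using gap by (intro mf_rhs_increment_le[OF ab]) simp_all
  moreover have "(a + 1 + 2 * b) * E < \<rho> * exp (\<rho> * t) * h x"
    using \<rho> hx unfolding E_def by (simp add: mult.assoc[symmetric] mult_strict_right_mono)
  ultimately show False using D Dlo(2) Dhi(2) by linarith
qed

lemma mf_comparison_strict:
  assumes ab: "0 \<le> a" "0 \<le> b" "M \<ge> 1"
    and lo: "mf_subsolution a b M T lo" and hi: "mf_supersolution a b M T hi"
    and h: "mf_weight M h" and h_pos: "\<forall>x. 0 < h x" and h_far: "\<forall>x. R < \<bar>x\<bar> \<longrightarrow> 1 < h x"
    and init: "\<forall>x. lo 0 x < hi 0 x + h x"
  shows "\<forall>t\<in>{0..T}. \<forall>x. lo t x < hi t x + exp (comparison_rate a b M * t) * h x"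
proof (rule strict_order_persists[where R = R])
  show "\<forall>x. continuous_on {0..T} (\<lambda>t. lo t x)" using mf_subsolution_continuous[OF lo] by blast
  show "\<forall>x. continuous_on {0..T} (\<lambda>t. hi t x + exp (comparison_rate a b M * t) * h x)"
    using mf_supersolution_continuous[OF hi] by (auto intro!: continuous_intros)
  show "\<forall>x. lo 0 x < hi 0 x + exp (comparison_rate a b M * 0) * h x" using init by simp
  show "\<forall>t\<in>{0..T}. \<forall>x. R < \<bar>x\<bar> \<longrightarrow> lo t x < hi t x + exp (comparison_rate a b M * t) * h x"
  proof (intro ballI allI impI)
    fix t x assume t: "t \<in> {0..T}" and "R < \<bar>x\<bar>"
    then have "1 \<le> exp (comparison_rate a b M * t)" "1 < h x"
      using h_far comparison_rate_pos[OF ab(1,2), of M] by auto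
    then have "h x \<le> exp (comparison_rate a b M * t) * h x" by (simp add: mult_le_cancel_right1)
    then have "1 < exp (comparison_rate a b M * t) * h x" using \<open>1 < h x\<close> by linarith
    moreover have "lo t x \<le> 1" "0 \<le> hi t x"
      using lo hi t unfolding mf_subsolution_def mf_supersolution_def by auto
    ultimately show "lo t x < hi t x + exp (comparison_rate a b M * t) * h x" by linarith
  qed
  show "\<forall>t\<in>{0<..T}. \<forall>x. (\<forall>y. lo t y \<le> hi t y + exp (comparison_rate a b M * t) * h y) \<longrightarrow>
          lo t x = hi t x + exp (comparison_rate a b M * t) * h x \<longrightarrow>
          (\<forall>s\<in>{0..<t}. lo s x < hi s x + exp (comparison_rate a b M * s) * h x) \<longrightarrow> False"
    using mf_no_first_touch[OF ab lo hi h] h_pos by blast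
qed

text \<open>The strict version is applied with the weight perturbed by \<open>\<epsilon> (e\<^sup>x + e\<^sup>-\<^sup>x)\<close>, which makes
  far-away sites harmless; then \<open>\<epsilon> \<rightarrow> 0\<close>.\<close>
lemma mf_comparison:
  assumes ab: "0 \<le> a" "0 \<le> b" "M \<ge> 1"
    and lo: "mf_subsolution a b M T lo" and hi: "mf_supersolution a b M T hi"
    and h: "mf_weight M h" and init: "\<forall>x. lo 0 x \<le> hi 0 x + h x" and t: "t \<in> {0..T}"
  shows "lo t x \<le> hi t x + exp (comparison_rate a b M * t) * h x"
proof (rule field_le_epsilon)
  fix e :: real assume "0 < e"
  define \<rho> where "\<rho> = comparison_rate a b M"
  have ww: "exp (\<bar>real_of_int y\<bar>) \<le> window_weight 0 y" for y
    using window_weight_ge[of y 0] by simp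
  define \<epsilon> where "\<epsilon> = e / (exp (\<rho> * t) * window_weight 0 x)"
  have "0 < window_weight 0 x" using ww[of x] by (smt (verit) exp_gt_zero)
  then have \<epsilon>: "0 < \<epsilon>" unfolding \<epsilon>_def using \<open>0 < e\<close> by simp
  have "\<forall>t\<in>{0..T}. \<forall>x. lo t x < hi t x + exp (\<rho> * t) * (h x + \<epsilon> * window_weight 0 x)"
    unfolding \<rho>_def
  proof (rule mf_comparison_strict[OF ab lo hi, where R = "\<lceil>1 / \<epsilon>\<rceil>"])
    show "mf_weight M (\<lambda>x. h x + \<epsilon> * window_weight 0 x)"
      using \<epsilon> by (intro mf_weight_add h mf_weight_scale mf_weight_window) auto
    have h0: "0 \<le> h y" for y using h by (simp add: mf_weight_def)
    have pos: "0 < \<epsilon> * window_weight 0 y" for y using \<epsilon> ww[of y] by (smt (verit) exp_gt_zero mult_pos_pos)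
    show "\<forall>x. 0 < h x + \<epsilon> * window_weight 0 x" using h0 pos by (simp add: add_nonneg_pos)
    show "\<forall>x. lo 0 x < hi 0 x + (h x + \<epsilon> * window_weight 0 x)"
      using init pos by (smt (verit))
    show "\<forall>x. \<lceil>1 / \<epsilon>\<rceil> < \<bar>x\<bar> \<longrightarrow> 1 < h x + \<epsilon> * window_weight 0 x"
    proof (intro allI impI)
      fix y :: int assume "\<lceil>1 / \<epsilon>\<rceil> < \<bar>y\<bar>"
      then have "1 < \<epsilon> * \<bar>real_of_int y\<bar>" using \<epsilon> by (simp add: field_simps ceiling_less_iff)
      also have "\<dots> \<le> \<epsilon> * window_weight 0 y"
        using \<epsilon> ww[of y] by (smt (verit) exp_ge_add_one_self mult_left_mono)
      finally show "1 < h y + \<epsilon> * window_weight 0 y" using h0[of y] by linarith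
    qed
  qed
  then have "lo t x < hi t x + exp (\<rho> * t) * (h x + \<epsilon> * window_weight 0 x)" using t by blast
  moreover have "exp (\<rho> * t) * (\<epsilon> * window_weight 0 x) = e"
    using \<open>0 < window_weight 0 x\<close> unfolding \<epsilon>_def by simp
  ultimately have "lo t x < hi t x + exp (\<rho> * t) * h x + e" by (simp add: distrib_left)
  then show "lo t x \<le> hi t x + exp (comparison_rate a b M * t) * h x + e" unfolding \<rho>_def by simp
qed

lemma mf_solution_antimono:
  assumes ab: "0 \<le> a" "0 \<le> b" "M \<ge> 1" and sol: "mf_solution a b M W"
    and dec: "\<forall>x. W 0 (x + 1) \<le> W 0 x" and t: "0 \<le> t" and xy: "x \<le> y"
  shows "W t y \<le> W t x"
proof -
  have step: "W t (z + 1) \<le> W t z" for z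
    using mf_comparison[OF ab mf_solution_imp_subsolution[OF mf_solution_shift[OF sol]]
        mf_solution_imp_supersolution[OF sol] mf_weight_const[of 0], where T = t and t = t and x = z] dec t
    by simp
  have "W t (x + int n) \<le> W t x" for n
  proof (induction n)
    case (Suc n)
    then show ?case using step[of "x + int n"] by (simp add: ac_simps)
  qed simp
  from this[of "nat (y - x)"] show ?thesis using xy by simp
qed

section \<open>Plateaus and fronts\<close>

lemma window_lower_bound:
  assumes ab: "0 \<le> a" "0 \<le> b" "M \<ge> 1" and sol: "mf_solution a b M v" and s: "0 \<le> s"
    and sub: "mf_subsolution a b M T (\<lambda>t x. w t)" and init: "\<forall>x. \<bar>x\<bar> \<le> K \<longrightarrow> w 0 \<le> v s x"
    and t: "t \<in> {0..T}" and x: "\<bar>x\<bar> \<le> K - R"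
  shows "w t - 2 * exp (comparison_rate a b M * t) * exp (- real_of_int R) \<le> v (s + t) x"
proof -
  have "w 0 \<le> 1" using sub t unfolding mf_subsolution_def by auto
  have "\<forall>y. w 0 \<le> v s y + window_weight K y"
  proof
    fix y
    have "0 \<le> window_weight K y" "0 \<le> v s y" using mf_weight_window mf_solution_bounds[OF sol s]
      by (auto simp: mf_weight_def)
    then show "w 0 \<le> v s y + window_weight K y"
      using init window_weight_ge_one[of K y] \<open>w 0 \<le> 1\<close> by (cases "\<bar>y\<bar> \<le> K") auto
  qed
  with mf_comparison[OF ab sub mf_solution_imp_supersolution[OF mf_solution_time_shift[OF sol s]]
      mf_weight_window _ t]
  have "w t \<le> v (s + t) x + exp (comparison_rate a b M * t) * window_weight K x" by simp
  moreover have "exp (comparison_rate a b M * t) * window_weight K x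
      \<le> exp (comparison_rate a b M * t) * (2 * exp (- real_of_int R))"
    using window_weight_le[OF x] by (intro mult_left_mono) auto
  ultimately show ?thesis by linarith
qed

lemma window_upper_bound:
  assumes ab: "0 \<le> a" "0 \<le> b" "M \<ge> 1" and sol: "mf_solution a b M v" and s: "0 \<le> s"
    and super: "mf_supersolution a b M T (\<lambda>t x. w t)" and init: "\<forall>x. \<bar>x\<bar> \<le> K \<longrightarrow> v s x \<le> w 0"
    and t: "t \<in> {0..T}" and x: "\<bar>x\<bar> \<le> K - R"
  shows "v (s + t) x \<le> w t + 2 * exp (comparison_rate a b M * t) * exp (- real_of_int R)"
proof -
  have "0 \<le> w 0" using super t unfolding mf_supersolution_def by auto
  have "\<forall>y. v s y \<le> w 0 + window_weight K y"
  proof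
    fix y
    have "0 \<le> window_weight K y" "v s y \<le> 1" using mf_weight_window mf_solution_bounds[OF sol s]
      by (auto simp: mf_weight_def)
    then show "v s y \<le> w 0 + window_weight K y"
      using init window_weight_ge_one[of K y] \<open>0 \<le> w 0\<close> by (cases "\<bar>y\<bar> \<le> K") auto
  qed
  with mf_comparison[OF ab mf_solution_imp_subsolution[OF mf_solution_time_shift[OF sol s]] super
      mf_weight_window _ t]
  have "v (s + t) x \<le> w t + exp (comparison_rate a b M * t) * window_weight K x" by simp
  moreover have "exp (comparison_rate a b M * t) * window_weight K x
      \<le> exp (comparison_rate a b M * t) * (2 * exp (- real_of_int R))"
    using window_weight_le[OF x] by (intro mult_left_mono) auto
  ultimately show ?thesis by linarith
qed

lemma exists_exp_tail_le:
  assumes "0 < C" "0 < d"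
  shows "\<exists>R::int. 1 \<le> R \<and> C * exp (- real_of_int R) \<le> d"
proof -
  define R where "R = max 1 \<lceil>ln (C / d)\<rceil>"
  have "ln (C / d) \<le> real_of_int R" unfolding R_def by linarith
  then have "exp (- real_of_int R) \<le> exp (- ln (C / d))" by simp
  also have "\<dots> = d / C" using assms by (simp add: exp_minus)
  finally have "C * exp (- real_of_int R) \<le> d" using assms by (simp add: field_simps)
  moreover have "1 \<le> R" unfolding R_def by simp
  ultimately show ?thesis by blast
qed

lemma lower_plateau_rises:
  assumes ab: "0 \<le> a" "0 \<le> b" "M \<ge> 1" and r: "4 \<le> a + b"
    and lvl: "u_minus (a + b) < lo" "lo < hi" "hi < u_plus (a + b)" and \<delta>: "0 < \<delta>"
  shows "\<exists>\<tau>>0. \<exists>R\<ge>0. \<forall>v s K x. mf_solution a b M v \<longrightarrow> 0 \<le> s \<longrightarrow> (\<forall>y. \<bar>y\<bar> \<le> K \<longrightarrow> lo \<le> v s y) \<longrightarrow>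
           \<bar>x\<bar> \<le> K - R \<longrightarrow> hi - \<delta> \<le> v (s + \<tau>) x"
proof -
  define \<gamma> where "\<gamma> = (a + b) * (lo * (lo - u_minus (a + b)) * (u_plus (a + b) - hi))"
  define \<tau> where "\<tau> = (hi - lo) / \<gamma>"
  define \<rho> where "\<rho> = comparison_rate a b M"
  have bounds: "0 < u_minus (a + b)" "u_plus (a + b) < 1" using u_minus_u_plus[OF r] by auto
  then have "0 < \<gamma>" unfolding \<gamma>_def using lvl r by simp
  then have \<tau>: "0 < \<tau>" "lo + \<gamma> * \<tau> = hi" unfolding \<tau>_def using lvl by auto
  have sub: "mf_subsolution a b M \<tau> (\<lambda>t x. lo + \<gamma> * t)"
    by (rule mf_subsolution_rising)
      (use ab \<tau> \<open>0 < \<gamma>\<close> bounds lvl mf_reaction_ge_between[OF r] in \<open>auto simp: \<gamma>_def\<close>)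
  obtain R :: int where R: "1 \<le> R" "2 * exp (\<rho> * \<tau>) * exp (- real_of_int R) \<le> \<delta>"
    using exists_exp_tail_le[of "2 * exp (\<rho> * \<tau>)" \<delta>] \<delta> by auto
  have "hi - \<delta> \<le> v (s + \<tau>) x"
    if "mf_solution a b M v" "0 \<le> s" "\<forall>y. \<bar>y\<bar> \<le> K \<longrightarrow> lo \<le> v s y" "\<bar>x\<bar> \<le> K - R" for v s K x
    using window_lower_bound[OF ab that(1,2) sub _ _ that(4), of \<tau>] that(3) \<tau> R unfolding \<rho>_def by simp
  then show ?thesis using \<tau>(1) R(1) by (intro exI[of _ \<tau>] conjI exI[of _ R] allI impI) auto
qed

lemma lower_plateau_persists:
  assumes ab: "0 \<le> a" "0 \<le> b" "M \<ge> 1" and r: "4 \<le> a + b"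
    and c: "u_minus (a + b) \<le> c" "c \<le> u_plus (a + b)" and \<delta>: "0 < \<delta>"
  shows "\<exists>R\<ge>0. \<forall>v s K t x. mf_solution a b M v \<longrightarrow> 0 \<le> s \<longrightarrow> (\<forall>y. \<bar>y\<bar> \<le> K \<longrightarrow> c \<le> v s y) \<longrightarrow>
           t \<in> {0..T} \<longrightarrow> \<bar>x\<bar> \<le> K - R \<longrightarrow> c - \<delta> \<le> v (s + t) x"
proof -
  define \<rho> where "\<rho> = comparison_rate a b M"
  have bounds: "0 < u_minus (a + b)" "u_plus (a + b) < 1" using u_minus_u_plus[OF r] by auto
  have "(a + b) * (c * (c - u_minus (a + b)) * (u_plus (a + b) - c)) \<le> mf_reaction (a + b) c"
    using mf_reaction_ge_between[OF r c(1) order_refl order_refl c(2)] .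
  moreover have "0 \<le> (a + b) * (c * (c - u_minus (a + b)) * (u_plus (a + b) - c))"
    using bounds c r by simp
  ultimately have sub: "mf_subsolution a b M T (\<lambda>t x. c)"
    using bounds c by (intro mf_subsolution_const[OF ab(3)]) auto
  obtain R :: int where R: "1 \<le> R" "2 * exp (\<rho> * T) * exp (- real_of_int R) \<le> \<delta>"
    using exists_exp_tail_le[of "2 * exp (\<rho> * T)" \<delta>] \<delta> by auto
  have "c - \<delta> \<le> v (s + t) x"
    if "mf_solution a b M v" "0 \<le> s" "\<forall>y. \<bar>y\<bar> \<le> K \<longrightarrow> c \<le> v s y" "t \<in> {0..T}" "\<bar>x\<bar> \<le> K - R"
    for v s K t x
  proof -
    have "exp (\<rho> * t) \<le> exp (\<rho> * T)"
      using that(4) comparison_rate_pos[OF ab(1,2)] unfolding \<rho>_def by (simp add: mult_left_mono)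
    then have "2 * exp (\<rho> * t) * exp (- real_of_int R) \<le> 2 * exp (\<rho> * T) * exp (- real_of_int R)"
      by (intro mult_right_mono) auto
    then have "2 * exp (\<rho> * t) * exp (- real_of_int R) \<le> \<delta>" using R(2) by linarith
    then show ?thesis using window_lower_bound[OF ab that(1,2) sub that(3,4,5)] unfolding \<rho>_def by simp
  qed
  then show ?thesis using R by (intro exI[of _ R]) auto
qed

lemma upper_plateau_sinks:
  assumes ab: "0 \<le> a" "0 \<le> b" "M \<ge> 1" and r: "4 \<le> a + b"
    and lvl: "0 < lo" "lo < hi" "hi < u_minus (a + b)" and \<delta>: "0 < \<delta>"
  shows "\<exists>\<tau>>0. \<exists>R\<ge>0. \<forall>v s K x. mf_solution a b M v \<longrightarrow> 0 \<le> s \<longrightarrow> (\<forall>y. \<bar>y\<bar> \<le> K \<longrightarrow> v s y \<le> hi) \<longrightarrow>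
           \<bar>x\<bar> \<le> K - R \<longrightarrow> v (s + \<tau>) x \<le> lo + \<delta>"
proof -
  define \<gamma> where "\<gamma> = (a + b) * (lo * (u_minus (a + b) - hi) * (u_plus (a + b) - hi))"
  define \<tau> where "\<tau> = (hi - lo) / \<gamma>"
  define \<rho> where "\<rho> = comparison_rate a b M"
  have bounds: "0 < u_minus (a + b)" "u_minus (a + b) \<le> u_plus (a + b)" "u_plus (a + b) < 1"
    using u_minus_u_plus[OF r] by auto
  then have "0 < \<gamma>" unfolding \<gamma>_def using lvl r by simp
  then have \<tau>: "0 < \<tau>" "hi - \<gamma> * \<tau> = lo" unfolding \<tau>_def using lvl by auto
  have super: "mf_supersolution a b M \<tau> (\<lambda>t x. hi - \<gamma> * t)"
    by (rule mf_supersolution_falling)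
      (use ab \<tau> \<open>0 < \<gamma>\<close> bounds lvl mf_reaction_le_below[OF r] in \<open>auto simp: \<gamma>_def\<close>)
  obtain R :: int where R: "1 \<le> R" "2 * exp (\<rho> * \<tau>) * exp (- real_of_int R) \<le> \<delta>"
    using exists_exp_tail_le[of "2 * exp (\<rho> * \<tau>)" \<delta>] \<delta> by auto
  have "v (s + \<tau>) x \<le> lo + \<delta>"
    if "mf_solution a b M v" "0 \<le> s" "\<forall>y. \<bar>y\<bar> \<le> K \<longrightarrow> v s y \<le> hi" "\<bar>x\<bar> \<le> K - R" for v s K x
    using window_upper_bound[OF ab that(1,2) super _ _ that(4), of \<tau>] that(3) \<tau> R unfolding \<rho>_def by simp
  then show ?thesis using \<tau>(1) R(1) by (intro exI[of _ \<tau>] conjI exI[of _ R] allI impI) auto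
qed

lemma upper_plateau_persists:
  assumes ab: "0 \<le> a" "0 \<le> b" "M \<ge> 1" and r: "4 \<le> a + b"
    and c: "0 \<le> c" "c \<le> u_minus (a + b)" and \<delta>: "0 < \<delta>"
  shows "\<exists>R\<ge>0. \<forall>v s K t x. mf_solution a b M v \<longrightarrow> 0 \<le> s \<longrightarrow> (\<forall>y. \<bar>y\<bar> \<le> K \<longrightarrow> v s y \<le> c) \<longrightarrow>
           t \<in> {0..T} \<longrightarrow> \<bar>x\<bar> \<le> K - R \<longrightarrow> v (s + t) x \<le> c + \<delta>"
proof -
  define \<rho> where "\<rho> = comparison_rate a b M"
  have bounds: "u_minus (a + b) \<le> u_plus (a + b)" "u_plus (a + b) < 1" using u_minus_u_plus[OF r] by auto
  have "mf_reaction (a + b) c \<le> - ((a + b) * (c * (u_minus (a + b) - c) * (u_plus (a + b) - c)))"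
    using mf_reaction_le_below[OF r c(1) order_refl order_refl c(2)] .
  moreover have "0 \<le> (a + b) * (c * (u_minus (a + b) - c) * (u_plus (a + b) - c))"
    using bounds c r by simp
  ultimately have super: "mf_supersolution a b M T (\<lambda>t x. c)"
    using bounds c by (intro mf_supersolution_const[OF ab(3)]) auto
  obtain R :: int where R: "1 \<le> R" "2 * exp (\<rho> * T) * exp (- real_of_int R) \<le> \<delta>"
    using exists_exp_tail_le[of "2 * exp (\<rho> * T)" \<delta>] \<delta> by auto
  have "v (s + t) x \<le> c + \<delta>"
    if "mf_solution a b M v" "0 \<le> s" "\<forall>y. \<bar>y\<bar> \<le> K \<longrightarrow> v s y \<le> c" "t \<in> {0..T}" "\<bar>x\<bar> \<le> K - R"
    for v s K t x
  proof -
    have "exp (\<rho> * t) \<le> exp (\<rho> * T)"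
      using that(4) comparison_rate_pos[OF ab(1,2)] unfolding \<rho>_def by (simp add: mult_left_mono)
    then have "2 * exp (\<rho> * t) * exp (- real_of_int R) \<le> 2 * exp (\<rho> * T) * exp (- real_of_int R)"
      by (intro mult_right_mono) auto
    then have "2 * exp (\<rho> * t) * exp (- real_of_int R) \<le> \<delta>" using R(2) by linarith
    then show ?thesis using window_upper_bound[OF ab that(1,2) super that(3,4,5)] unfolding \<rho>_def by simp
  qed
  then show ?thesis using R by (intro exI[of _ R]) auto
qed

lemma mf_solution_eventually_below:
  assumes ab: "0 \<le> a" "0 \<le> b" "M \<ge> 1" and sol: "mf_solution a b M v"
    and \<gamma>: "0 < \<gamma>" and \<beta>: "0 \<le> \<beta>" "\<beta> \<le> 1"
    and reaction: "\<forall>s\<in>{\<beta>..1}. mf_reaction (a + b) s \<le> - \<gamma>"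
    and t: "(1 - \<beta>) / \<gamma> \<le> t"
  shows "v t x \<le> \<beta>"
proof -
  define T where "T = (1 - \<beta>) / \<gamma>"
  have T: "0 \<le> T" "1 - \<gamma> * T = \<beta>" unfolding T_def using \<gamma> \<beta> by auto
  have "mf_supersolution a b M T (\<lambda>t x. 1 - \<gamma> * t)"
    by (rule mf_supersolution_falling) (use ab \<gamma> \<beta> T reaction in auto)
  from mf_comparison[OF ab mf_solution_imp_subsolution[OF sol] this mf_weight_const[of 0]] T
  have "\<forall>y. v T y \<le> \<beta>" using mf_solution_bounds[OF sol, of 0] by fastforce
  moreover have super: "mf_supersolution a b M (t - T) (\<lambda>t x. \<beta>)"
  proof (rule mf_supersolution_const)
    show "mf_reaction (a + b) \<beta> \<le> 0" using reaction \<beta> \<gamma> by force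
  qed (use ab \<beta> in auto)
  ultimately have init: "\<forall>y. v (T + 0) y \<le> \<beta> + 0" by simp
  have "t - T \<in> {0..t - T}" using t unfolding T_def by simp
  from mf_comparison[OF ab mf_solution_imp_subsolution[OF mf_solution_time_shift[OF sol T(1)]] super
      mf_weight_const[of 0] init this]
  show ?thesis by simp
qed

lemma supercritical_eventually_below:
  assumes ab: "0 \<le> a" "0 \<le> b" "M \<ge> 1" and r: "4 \<le> a + b"
    and u': "u_plus (a + b) < u'" "u' \<le> 1"
  shows "\<exists>T\<ge>0. \<forall>v t x. mf_solution a b M v \<longrightarrow> T \<le> t \<longrightarrow> v t x \<le> u'"
proof -
  have bounds: "0 < u_minus (a + b)" "u_minus (a + b) \<le> u_plus (a + b)" using u_minus_u_plus[OF r] by auto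
  define \<gamma> where "\<gamma> = (a + b) * (u' * (u' - u_minus (a + b)) * (u' - u_plus (a + b)))"
  have "0 < \<gamma>" unfolding \<gamma>_def using u' bounds r by simp
  moreover have "\<forall>s\<in>{u'..1}. mf_reaction (a + b) s \<le> - \<gamma>"
    unfolding \<gamma>_def using mf_reaction_le_above[OF r] u' by auto
  moreover have "0 \<le> u'" using u' bounds by linarith
  ultimately have "v t x \<le> u'" if "mf_solution a b M v" "(1 - u') / \<gamma> \<le> t" for v t x
    using mf_solution_eventually_below[OF ab that(1)] that(2) u'(2) by blast
  moreover have "0 \<le> (1 - u') / \<gamma>" using \<open>0 < \<gamma>\<close> u' by simp
  ultimately show ?thesis by blast
qed

lemma front_lower_bound:
  assumes ab: "0 \<le> a" "0 \<le> b" "M \<ge> 1" and sol: "mf_solution a b M v" and solW: "mf_solution a b M W"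
    and W0: "\<forall>x. W 0 x = (if x \<le> 0 then u else 0)" and Wt: "W t0 1 = u" and t0: "0 \<le> t0"
    and u: "0 \<le> u" "u \<le> 1" and \<eta>: "0 \<le> \<eta>"
    and init: "\<forall>x. - 2 * p \<le> x \<and> x \<le> 0 \<longrightarrow> u - \<eta> \<le> v 0 x" and y: "y \<le> 1"
  shows "u - exp (comparison_rate a b M * t0) * (exp (- real_of_int y - 2 * real_of_int p) + \<eta>) \<le> v t0 y"
proof -
  define h where "h x = exp (- real_of_int x - 2 * real_of_int p) + \<eta>" for x
  have "W t0 y \<le> v t0 y + exp (comparison_rate a b M * t0) * h y"
  proof (rule mf_comparison[OF ab mf_solution_imp_subsolution[OF solW] mf_solution_imp_supersolution[OF sol]])
    show "mf_weight M h" unfolding h_def by (intro mf_weight_add mf_weight_exp_left mf_weight_const \<eta>)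
    show "\<forall>x. W 0 x \<le> v 0 x + h x"
    proof
      fix x
      have v: "0 \<le> v 0 x" and h: "\<eta> \<le> h x" "0 \<le> h x"
        using mf_solution_bounds[OF sol, of 0 x] \<eta> unfolding h_def by (auto intro: add_nonneg_nonneg)
      consider "0 < x" | "- 2 * p \<le> x" "x \<le> 0" | "x < - 2 * p" by linarith
      then show "W 0 x \<le> v 0 x + h x"
      proof cases
        case 1
        then show ?thesis using W0 v h by simp
      next
        case 2
        then have "u - \<eta> \<le> v 0 x" using init by blast
        then show ?thesis using W0 h \<open>x \<le> 0\<close> by simp
      next
        case 3
        then have "1 \<le> h x" using \<eta> unfolding h_def by (simp add: add_increasing2)
        then show ?thesis using W0 u v by simp
      qed
    qed
  qed (use t0 in auto)
  moreover have "u \<le> W t0 y"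
    using mf_solution_antimono[OF ab solW _ t0 y] W0 Wt u by simp
  ultimately show ?thesis unfolding h_def by linarith
qed

lemma front_upper_bound:
  assumes ab: "0 \<le> a" "0 \<le> b" "M \<ge> 1" and sol: "mf_solution a b M v" and solR: "mf_solution a b M R"
    and R0: "\<forall>x. R 0 x = (if x < 0 then u' else u)" and Rt: "R t0 (-1) = u" and t0: "0 \<le> t0"
    and u: "u \<le> u'" and \<eta>: "0 \<le> \<eta>" and below: "\<forall>x. v 0 x \<le> u'"
    and init: "\<forall>x. 0 \<le> x \<and> x \<le> 2 * p \<longrightarrow> v 0 x \<le> u + \<eta>" and y: "-1 \<le> y"
  shows "v t0 y \<le> u + exp (comparison_rate a b M * t0) * (exp (real_of_int y - 2 * real_of_int p) + \<eta>)"
proof -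
  define h where "h x = exp (real_of_int x - 2 * real_of_int p) + \<eta>" for x
  have "v t0 y \<le> R t0 y + exp (comparison_rate a b M * t0) * h y"
  proof (rule mf_comparison[OF ab mf_solution_imp_subsolution[OF sol] mf_solution_imp_supersolution[OF solR]])
    show "mf_weight M h" unfolding h_def by (intro mf_weight_add mf_weight_exp_right mf_weight_const \<eta>)
    show "\<forall>x. v 0 x \<le> R 0 x + h x"
    proof
      fix x
      have v: "v 0 x \<le> 1" and R: "0 \<le> R 0 x" and h: "\<eta> \<le> h x" "0 \<le> h x"
        using mf_solution_bounds[OF sol, of 0 x] mf_solution_bounds[OF solR, of 0 x] \<eta>
        unfolding h_def by (auto intro: add_nonneg_nonneg)
      consider "x < 0" | "0 \<le> x" "x \<le> 2 * p" | "2 * p < x" by linarith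
      then show "v 0 x \<le> R 0 x + h x"
      proof cases
        case 1
        then show ?thesis using R0 below[rule_format, of x] h by simp
      next
        case 2
        then have "v 0 x \<le> u + \<eta>" using init by blast
        then show ?thesis using R0 h \<open>0 \<le> x\<close> by simp
      next
        case 3
        then have "1 \<le> h x" using \<eta> unfolding h_def by (simp add: add_increasing2)
        then show ?thesis using v R by linarith
      qed
    qed
  qed (use t0 in auto)
  moreover have "R t0 y \<le> u"
    using mf_solution_antimono[OF ab solR _ t0 y] R0 Rt u by simp
  ultimately show ?thesis unfolding h_def by linarith
qed

lemma expansion_step:
  assumes ab: "0 \<le> a" "0 \<le> b" "M \<ge> 1" and sol: "mf_solution a b M v" and solW: "mf_solution a b M W"
    and W0: "\<forall>x. W 0 x = (if x \<le> 0 then u else 0)" and Wt: "W t0 1 = u" and t0: "0 \<le> t0"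
    and u: "0 \<le> u" "u \<le> 1" and s: "0 \<le> s" and \<eta>: "exp (- real_of_int p) \<le> \<eta>"
    and init: "\<forall>x. \<bar>x\<bar> \<le> p \<longrightarrow> u - \<eta> \<le> v s x" and x: "\<bar>x\<bar> \<le> p + 1"
  shows "u - 2 * exp (comparison_rate a b M * t0) * \<eta> \<le> v (s + t0) x"
proof -
  have "0 \<le> \<eta>" using \<eta> by (meson exp_ge_zero order_trans)
  have right: "u - 2 * exp (comparison_rate a b M * t0) * \<eta> \<le> w t0 y"
    if solw: "mf_solution a b M w" and initw: "\<forall>x. \<bar>x\<bar> \<le> p \<longrightarrow> u - \<eta> \<le> w 0 x"
      and y: "0 \<le> y" "y \<le> p + 1" for w y
  proof -
    have "\<forall>x. - 2 * p \<le> x \<and> x \<le> 0 \<longrightarrow> u - \<eta> \<le> w 0 (x + p)"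
      using initw by (auto dest: spec[of _ "_ + p"])
    then have bound: "u - exp (comparison_rate a b M * t0) * (exp (- real_of_int (y - p) - 2 * real_of_int p) + \<eta>)
        \<le> w t0 y"
      using front_lower_bound[OF ab mf_solution_shift[OF solw, of p] solW W0 Wt t0 u \<open>0 \<le> \<eta>\<close>,
          where p = p and y = "y - p"] y by simp
    have e: "exp (- real_of_int (y - p) - 2 * real_of_int p) \<le> exp (- real_of_int p)"
      using y by simp
    moreover have "exp (comparison_rate a b M * t0) * (exp (- real_of_int (y - p) - 2 * real_of_int p) + \<eta>)
        \<le> exp (comparison_rate a b M * t0) * (2 * \<eta>)"
      using e \<eta> by (intro mult_left_mono) (linarith, simp)
    ultimately show ?thesis using bound by linarith
  qed
  have vs: "mf_solution a b M (\<lambda>t x. v (s + t) x)" by (rule mf_solution_time_shift[OF sol s])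
  show ?thesis
  proof (cases "0 \<le> x")
    case True
    then show ?thesis using right[OF vs _ True] init x by simp
  next
    case False
    then show ?thesis using right[OF mf_solution_reflect[OF vs], of "- x"] init x by simp
  qed
qed

lemma retreat_step:
  assumes ab: "0 \<le> a" "0 \<le> b" "M \<ge> 1" and sol: "mf_solution a b M v" and solR: "mf_solution a b M R"
    and R0: "\<forall>x. R 0 x = (if x < 0 then u' else u)" and Rt: "R t0 (-1) = u" and t0: "0 \<le> t0"
    and u: "u \<le> u'" and s: "0 \<le> s" and below: "\<forall>x. v s x \<le> u'" and \<eta>: "exp (- real_of_int p) \<le> \<eta>"
    and init: "\<forall>x. \<bar>x\<bar> \<le> p \<longrightarrow> v s x \<le> u + \<eta>" and x: "\<bar>x\<bar> \<le> p + 1"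
  shows "v (s + t0) x \<le> u + 2 * exp (comparison_rate a b M * t0) * \<eta>"
proof -
  have "0 \<le> \<eta>" using \<eta> by (meson exp_ge_zero order_trans)
  have left: "w t0 y \<le> u + 2 * exp (comparison_rate a b M * t0) * \<eta>"
    if solw: "mf_solution a b M w" and belw: "\<forall>x. w 0 x \<le> u'"
      and initw: "\<forall>x. \<bar>x\<bar> \<le> p \<longrightarrow> w 0 x \<le> u + \<eta>" and y: "- p - 1 \<le> y" "y \<le> 0" for w y
  proof -
    have "\<forall>x. 0 \<le> x \<and> x \<le> 2 * p \<longrightarrow> w 0 (x - p) \<le> u + \<eta>"
      using initw by (auto dest: spec[of _ "_ - p"])
    then have bound: "w t0 y
        \<le> u + exp (comparison_rate a b M * t0) * (exp (real_of_int (y + p) - 2 * real_of_int p) + \<eta>)"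
      using front_upper_bound[OF ab mf_solution_shift[OF solw, of "- p"] solR R0 Rt t0 u \<open>0 \<le> \<eta>\<close>,
          where p = p and y = "y + p"] belw y by simp
    have e: "exp (real_of_int (y + p) - 2 * real_of_int p) \<le> exp (- real_of_int p)"
      using y by simp
    moreover have "exp (comparison_rate a b M * t0) * (exp (real_of_int (y + p) - 2 * real_of_int p) + \<eta>)
        \<le> exp (comparison_rate a b M * t0) * (2 * \<eta>)"
      using e \<eta> by (intro mult_left_mono) (linarith, simp)
    ultimately show ?thesis using bound by linarith
  qed
  have vs: "mf_solution a b M (\<lambda>t x. v (s + t) x)" by (rule mf_solution_time_shift[OF sol s])
  show ?thesis
  proof (cases "x \<le> 0")
    case True
    then show ?thesis using left[OF vs _ _ _ True] below init x by simp
  next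
    case False
    then show ?thesis using left[OF mf_solution_reflect[OF vs], of "- x"] below init x by simp
  qed
qed

section \<open>Spreading at linear speed\<close>

text \<open>The iteration is stated for an abstract \<open>g\<close>, which is \<open>v\<close> for expansion and \<open>- v\<close> for retreat.\<close>
lemma wave_steps_iterate:
  fixes g :: "real \<Rightarrow> int \<Rightarrow> real"
  assumes t0: "0 \<le> t0" and \<zeta>: "0 < \<zeta>" and Q: "1 \<le> Q"
    and wave: "\<forall>s\<ge>s0. \<forall>p\<ge>K0. \<forall>\<eta>\<ge>\<zeta>. (\<forall>x. \<bar>x\<bar> \<le> p \<longrightarrow> lo - \<eta> \<le> g s x) \<longrightarrow>
                 (\<forall>x. \<bar>x\<bar> \<le> p + 1 \<longrightarrow> lo - Q * \<eta> \<le> g (s + t0) x)"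
    and s: "s0 \<le> s" and K: "K0 \<le> K" and init: "\<forall>x. \<bar>x\<bar> \<le> K \<longrightarrow> lo - \<zeta> \<le> g s x"
  shows "\<forall>x. \<bar>x\<bar> \<le> K + int j \<longrightarrow> lo - Q ^ j * \<zeta> \<le> g (s + real j * t0) x"
proof (induction j)
  case 0
  then show ?case using init by simp
next
  case (Suc j)
  have "\<zeta> \<le> Q ^ j * \<zeta>" using Q \<zeta> by (simp add: mult_le_cancel_right1)
  moreover have "s0 \<le> s + real j * t0" using s t0 by (simp add: add_increasing2)
  moreover have "K0 \<le> K + int j" using K by simp
  ultimately have "\<forall>x. \<bar>x\<bar> \<le> K + int j + 1 \<longrightarrow> lo - Q * (Q ^ j * \<zeta>) \<le> g (s + real j * t0 + t0) x"
    using wave Suc.IH by blast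
  then show ?case by (simp add: algebra_simps)
qed

text \<open>A cycle of \<open>N = R + 1\<close> wave steps, which widen a plateau by one site each while its defect
  grows geometrically, followed by a growth step, which restores the level \<open>c\<close> at the cost of
  \<open>R\<close> sites, widens the plateau by one site.\<close>
lemma plateau_grows_per_cycle:
  fixes g :: "real \<Rightarrow> int \<Rightarrow> real" and N :: nat and K0 R :: int
  assumes t0: "0 \<le> t0" and \<tau>: "0 \<le> \<tau>" and Tc: "Tc = real N * t0 + \<tau>" and N: "int N = R + 1"
    and \<zeta>: "0 < \<zeta>" and Q: "1 \<le> Q"
    and wave: "\<forall>s\<ge>s0. \<forall>p\<ge>K0. \<forall>\<eta>\<ge>\<zeta>. (\<forall>x. \<bar>x\<bar> \<le> p \<longrightarrow> lo - \<eta> \<le> g s x) \<longrightarrow>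
                 (\<forall>x. \<bar>x\<bar> \<le> p + 1 \<longrightarrow> lo - Q * \<eta> \<le> g (s + t0) x)"
    and growth: "\<forall>s\<ge>s0. \<forall>K\<ge>K0. (\<forall>x. \<bar>x\<bar> \<le> K \<longrightarrow> lv \<le> g s x) \<longrightarrow>
                 (\<forall>x. \<bar>x\<bar> \<le> K - R \<longrightarrow> c \<le> g (s + \<tau>) x)"
    and lv: "lv \<le> lo - Q ^ N * \<zeta>" and c: "lo - \<zeta> \<le> c"
    and init: "\<forall>x. \<bar>x\<bar> \<le> K0 \<longrightarrow> c \<le> g s0 x"
  shows "\<forall>x. \<bar>x\<bar> \<le> K0 + int n \<longrightarrow> c \<le> g (s0 + real n * Tc) x"
proof (induction n)
  case 0
  then show ?case using init by simp
next
  case (Suc n)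
  define s where "s = s0 + real n * Tc"
  define K where "K = K0 + int n"
  have s: "s0 \<le> s" unfolding s_def Tc using t0 \<tau> by simp
  have "\<forall>x. \<bar>x\<bar> \<le> K + int N \<longrightarrow> lo - Q ^ N * \<zeta> \<le> g (s + real N * t0) x"
    by (rule wave_steps_iterate[OF t0 \<zeta> Q wave s]) (use Suc.IH c in \<open>auto simp: s_def K_def\<close>)
  then have "\<forall>x. \<bar>x\<bar> \<le> K + int N \<longrightarrow> lv \<le> g (s + real N * t0) x"
    using lv by fastforce
  moreover have "s0 \<le> s + real N * t0" using s t0 by (simp add: add_increasing2)
  moreover have "K0 \<le> K + int N" unfolding K_def by simp
  ultimately have "\<forall>x. \<bar>x\<bar> \<le> K + int N - R \<longrightarrow> c \<le> g (s + real N * t0 + \<tau>) x"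
    using growth by blast
  then show ?case unfolding s_def K_def Tc N by (simp add: algebra_simps)
qed

lemma spreading_by_cycles:
  fixes g :: "real \<Rightarrow> int \<Rightarrow> real" and N :: nat and K0 R R1 :: int
  assumes t0: "0 \<le> t0" and \<tau>: "0 < \<tau>" and Tc: "Tc = real N * t0 + \<tau>" and N: "int N = R + 1"
    and \<zeta>: "0 < \<zeta>" and Q: "1 \<le> Q"
    and wave: "\<forall>s\<ge>s0. \<forall>p\<ge>K0. \<forall>\<eta>\<ge>\<zeta>. (\<forall>x. \<bar>x\<bar> \<le> p \<longrightarrow> lo - \<eta> \<le> g s x) \<longrightarrow>
                 (\<forall>x. \<bar>x\<bar> \<le> p + 1 \<longrightarrow> lo - Q * \<eta> \<le> g (s + t0) x)"
    and growth: "\<forall>s\<ge>s0. \<forall>K\<ge>K0. (\<forall>x. \<bar>x\<bar> \<le> K \<longrightarrow> lv \<le> g s x) \<longrightarrow>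
                 (\<forall>x. \<bar>x\<bar> \<le> K - R \<longrightarrow> c \<le> g (s + \<tau>) x)"
    and hold: "\<forall>s\<ge>s0. \<forall>K. (\<forall>x. \<bar>x\<bar> \<le> K \<longrightarrow> c \<le> g s x) \<longrightarrow>
                 (\<forall>t\<in>{0..Tc}. \<forall>x. \<bar>x\<bar> \<le> K - R1 \<longrightarrow> d \<le> g (s + t) x)"
    and lv: "lv \<le> lo - Q ^ N * \<zeta>" and c: "lo - \<zeta> \<le> c"
    and init: "\<forall>x. \<bar>x\<bar> \<le> K0 \<longrightarrow> c \<le> g s0 x" and K0: "0 \<le> K0" and R1: "0 \<le> R1"
    and x: "\<bar>real_of_int x\<bar> \<le> 1 / Tc * t - (s0 / Tc + real_of_int R1 + 1)"
  shows "d \<le> g t x"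
proof -
  have "0 < Tc" unfolding Tc using t0 \<tau> by (simp add: add_nonneg_pos)
  define n where "n = nat \<lfloor>(t - s0) / Tc\<rfloor>"
  have "real_of_int R1 + 1 + \<bar>real_of_int x\<bar> \<le> (t - s0) / Tc"
    using x \<open>0 < Tc\<close> by (simp add: field_simps)
  then have fl: "R1 + 1 + \<bar>x\<bar> \<le> \<lfloor>(t - s0) / Tc\<rfloor>" by (simp add: le_floor_iff)
  then have "0 \<le> \<lfloor>(t - s0) / Tc\<rfloor>" using R1 abs_ge_zero[of x] by linarith
  then have n: "int n = \<lfloor>(t - s0) / Tc\<rfloor>" unfolding n_def by simp
  then have "real n \<le> (t - s0) / Tc" "(t - s0) / Tc < real n + 1" by linarith+
  then have t: "t - (s0 + real n * Tc) \<in> {0..Tc}" using \<open>0 < Tc\<close> by (simp add: field_simps)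
  have "s0 \<le> s0 + real n * Tc" using \<open>0 < Tc\<close> by simp
  moreover have "\<forall>x. \<bar>x\<bar> \<le> K0 + int n \<longrightarrow> c \<le> g (s0 + real n * Tc) x"
    by (rule plateau_grows_per_cycle[OF t0 less_imp_le[OF \<tau>] Tc N \<zeta> Q wave growth lv c init])
  moreover have "\<bar>x\<bar> \<le> K0 + int n - R1" using fl n K0 by simp
  ultimately have "d \<le> g (s0 + real n * Tc + (t - (s0 + real n * Tc))) x"
    using hold t by blast
  then show ?thesis by simp
qed

definition spreads_above :: "real \<Rightarrow> real \<Rightarrow> nat \<Rightarrow> real \<Rightarrow> real \<Rightarrow> real \<Rightarrow> real \<Rightarrow> real \<Rightarrow> bool" where
  "spreads_above a b M u L x0 \<delta> c \<longleftrightarrow>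
     (\<forall>v. mf_solution a b M v \<longrightarrow> (\<forall>x. \<bar>real_of_int x\<bar> \<le> L \<longrightarrow> u \<le> v 0 x) \<longrightarrow>
        (\<forall>t>0. \<forall>x. \<bar>real_of_int x\<bar> \<le> c * t - x0 \<longrightarrow> u + \<delta> \<le> v t x))"

definition spreads_below :: "real \<Rightarrow> real \<Rightarrow> nat \<Rightarrow> real \<Rightarrow> real \<Rightarrow> real \<Rightarrow> real \<Rightarrow> real \<Rightarrow> bool" where
  "spreads_below a b M u L x0 \<delta> c \<longleftrightarrow>
     (\<forall>v. mf_solution a b M v \<longrightarrow> (\<forall>x. \<bar>real_of_int x\<bar> \<le> L \<longrightarrow> v 0 x \<le> u) \<longrightarrow>
        (\<forall>t>0. \<forall>x. \<bar>real_of_int x\<bar> \<le> c * t - x0 \<longrightarrow> v t x \<le> u - \<delta>))"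

lemma subcritical_spreads_below:
  assumes ab: "0 \<le> a" "0 \<le> b" "M \<ge> 1" and r: "a + b < 4"
  shows "\<exists>x0. 0 < x0 \<and> spreads_below a b M (1/2) 1 x0 (1/4) 1"
proof -
  define \<kappa> where "\<kappa> = (1 - (a + b) / 4) / 4"
  have "0 < \<kappa>" unfolding \<kappa>_def using r by simp
  have "\<forall>s\<in>{1/4..1}. mf_reaction (a + b) s \<le> - \<kappa>"
  proof
    fix s :: real assume "s \<in> {1/4..1}"
    then have "s * (1 - (a + b) / 4) \<ge> 1/4 * (1 - (a + b) / 4)" using r by (intro mult_right_mono) auto
    moreover have "mf_reaction (a + b) s \<le> - (s * (1 - (a + b) / 4))"
      using mf_reaction_le_subcritical[of "a + b" s] ab \<open>s \<in> {1/4..1}\<close> by simp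
    ultimately show "mf_reaction (a + b) s \<le> - \<kappa>" unfolding \<kappa>_def by linarith
  qed
  then have "v t x \<le> 1/4" if "mf_solution a b M v" "(1 - 1/4) / \<kappa> \<le> t" for v t x
    using mf_solution_eventually_below[OF ab that(1) \<open>0 < \<kappa>\<close>, of "1/4"] that(2) by simp
  moreover have "0 < (1 - 1/4) / \<kappa> + 1" using \<open>0 < \<kappa>\<close> by (simp add: add_pos_pos)
  ultimately show ?thesis
    unfolding spreads_below_def by (intro exI[of _ "(1 - 1/4) / \<kappa> + 1"]) (auto simp: abs_le_iff)
qed

lemma expansion_spreads_above:
  assumes ab: "0 \<le> a" "0 \<le> b" "M \<ge> 1" and expansion: "expansion a b M"
  shows "\<exists>u L x0 \<delta> c. 0 < u \<and> 0 < L \<and> 0 < x0 \<and> 0 < \<delta> \<and> 0 < c \<and>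
           u_minus (a + b) < u \<and> u < u_plus (a + b) \<and> spreads_above a b M u L x0 \<delta> c"
proof -
  obtain u W t0 where r: "4 < a + b" and u: "u_minus (a + b) < u" "u < u_plus (a + b)"
    and solW: "mf_solution a b M W" and W0: "\<forall>x. W 0 x = (if x \<le> 0 then u else 0)"
    and t0: "0 < t0" and Wt: "W t0 1 = u"
    using expansion unfolding expansion_def by blast
  have bounds: "0 < u_minus (a + b)" "u_plus (a + b) < 1" using u_minus_u_plus r by auto
  define \<delta> where "\<delta> = (u_plus (a + b) - u) / 4"
  define lv where "lv = (u_minus (a + b) + u) / 2"
  have \<delta>: "0 < \<delta>" "u + \<delta> + \<delta> + \<delta> < u_plus (a + b)" unfolding \<delta>_def using u by (auto simp: field_simps)
  have lv: "u_minus (a + b) < lv" "lv < u" unfolding lv_def using u by auto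
  have "lv < u + \<delta> + \<delta> + \<delta>" using lv \<delta> by simp
  with lower_plateau_rises[OF ab less_imp_le[OF r] lv(1) _ \<delta>(2) \<delta>(1)]
  obtain \<tau> R where \<tau>: "0 < \<tau>" and R: "0 \<le> R"
    and growth: "\<forall>v s K x. mf_solution a b M v \<longrightarrow> 0 \<le> s \<longrightarrow> (\<forall>y. \<bar>y\<bar> \<le> K \<longrightarrow> lv \<le> v s y) \<longrightarrow>
                   \<bar>x\<bar> \<le> K - R \<longrightarrow> u + \<delta> + \<delta> \<le> v (s + \<tau>) x"
    unfolding add_diff_cancel_right' by blast
  define N where "N = nat (R + 1)"
  define Tc where "Tc = real N * t0 + \<tau>"
  have "u_minus (a + b) \<le> u + \<delta> + \<delta>" "u + \<delta> + \<delta> \<le> u_plus (a + b)" using u \<delta> by simp_all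
  with lower_plateau_persists[OF ab less_imp_le[OF r] _ _ \<delta>(1), of "u + \<delta> + \<delta>" Tc]
  obtain R1 where R1: "0 \<le> R1"
    and hold: "\<forall>v s K t x. mf_solution a b M v \<longrightarrow> 0 \<le> s \<longrightarrow> (\<forall>y. \<bar>y\<bar> \<le> K \<longrightarrow> u + \<delta> + \<delta> \<le> v s y) \<longrightarrow>
                 t \<in> {0..Tc} \<longrightarrow> \<bar>x\<bar> \<le> K - R1 \<longrightarrow> u + \<delta> \<le> v (s + t) x"
    unfolding add_diff_cancel_right' by blast
  define Q where "Q = 2 * exp (comparison_rate a b M * t0)"
  define \<zeta> where "\<zeta> = (u - lv) / Q ^ N"
  have "1 \<le> exp (comparison_rate a b M * t0)" using comparison_rate_pos[OF ab(1,2), of M] t0 by simp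
  then have Q: "1 \<le> Q" unfolding Q_def by linarith
  then have \<zeta>: "0 < \<zeta>" "lv \<le> u - Q ^ N * \<zeta>" unfolding \<zeta>_def using lv by auto
  obtain K0 :: int where K0: "1 \<le> K0" "exp (- real_of_int K0) \<le> \<zeta>"
    using exists_exp_tail_le[of 1 \<zeta>] \<zeta> by auto
  have "spreads_above a b M u (K0 + R) (\<tau> / Tc + R1 + 1) \<delta> (1 / Tc)"
    unfolding spreads_above_def
  proof (intro allI impI)
    fix v t x
    assume sol: "mf_solution a b M v" and init: "\<forall>x. \<bar>real_of_int x\<bar> \<le> real_of_int (K0 + R) \<longrightarrow> u \<le> v 0 x"
      and x: "\<bar>real_of_int x\<bar> \<le> 1 / Tc * t - (\<tau> / Tc + real_of_int R1 + 1)"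
    have "\<forall>y. \<bar>y\<bar> \<le> K0 + R \<longrightarrow> lv \<le> v 0 y"
      using init lv by (metis of_int_abs of_int_le_iff order.strict_implies_order order_trans)
    then have start: "\<forall>x. \<bar>x\<bar> \<le> K0 \<longrightarrow> u + \<delta> + \<delta> \<le> v \<tau> x" using growth sol by fastforce
    show "u + \<delta> \<le> v t x"
    proof (rule spreading_by_cycles[where g = v and lo = u and lv = lv and c = "u + \<delta> + \<delta>",
          OF less_imp_le[OF t0] \<tau> Tc_def _ \<zeta>(1) Q _ _ _ \<zeta>(2) _ start _ R1 x])
      show "int N = R + 1" unfolding N_def using R by simp
      show "\<forall>s\<ge>\<tau>. \<forall>p\<ge>K0. \<forall>\<eta>\<ge>\<zeta>. (\<forall>x. \<bar>x\<bar> \<le> p \<longrightarrow> u - \<eta> \<le> v s x) \<longrightarrow>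
              (\<forall>x. \<bar>x\<bar> \<le> p + 1 \<longrightarrow> u - Q * \<eta> \<le> v (s + t0) x)"
      proof (intro allI impI)
        fix s p \<eta> x
        assume s: "\<tau> \<le> s" and p: "K0 \<le> p" and \<eta>: "\<zeta> \<le> \<eta>"
          and plateau: "\<forall>x. \<bar>x\<bar> \<le> p \<longrightarrow> u - \<eta> \<le> v s x" and x: "\<bar>x\<bar> \<le> p + 1"
        have "exp (- real_of_int p) \<le> exp (- real_of_int K0)" using p by simp
        then have "exp (- real_of_int p) \<le> \<eta>" using K0(2) \<eta> by linarith
        moreover have "0 \<le> u" "u \<le> 1" "0 \<le> s" using u bounds s \<tau> by auto
        ultimately show "u - Q * \<eta> \<le> v (s + t0) x"
          using expansion_step[OF ab sol solW W0 Wt less_imp_le[OF t0] _ _ _ _ plateau x]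
          unfolding Q_def by simp
      qed
      show "\<forall>s\<ge>\<tau>. \<forall>K\<ge>K0. (\<forall>x. \<bar>x\<bar> \<le> K \<longrightarrow> lv \<le> v s x) \<longrightarrow>
              (\<forall>x. \<bar>x\<bar> \<le> K - R \<longrightarrow> u + \<delta> + \<delta> \<le> v (s + \<tau>) x)"
        using growth sol \<tau> by fastforce
      show "\<forall>s\<ge>\<tau>. \<forall>K. (\<forall>x. \<bar>x\<bar> \<le> K \<longrightarrow> u + \<delta> + \<delta> \<le> v s x) \<longrightarrow>
              (\<forall>t\<in>{0..Tc}. \<forall>x. \<bar>x\<bar> \<le> K - R1 \<longrightarrow> u + \<delta> \<le> v (s + t) x)"
        using hold sol \<tau> by fastforce
    qed (use \<zeta> \<delta> K0 in auto)
  qed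
  moreover have "0 < Tc" unfolding Tc_def using t0 \<tau> by (simp add: add_nonneg_pos)
  ultimately show ?thesis using u bounds \<delta> K0 R R1 \<tau>
    by (intro exI[of _ u] exI[of _ "real_of_int (K0 + R)"] exI[of _ "\<tau> / Tc + R1 + 1"] exI[of _ \<delta>]
        exI[of _ "1 / Tc"]) (auto simp: add_pos_nonneg)
qed

lemma retreat_spreads_below:
  assumes ab: "0 \<le> a" "0 \<le> b" "M \<ge> 1" and r: "4 \<le> a + b" and retreat: "retreat a b M"
  shows "\<exists>u L x0 \<delta> c. 0 < u \<and> 0 < L \<and> 0 < x0 \<and> 0 < \<delta> \<and> 0 < c \<and>
           u < u_minus (a + b) \<and> spreads_below a b M u L x0 \<delta> c"
proof -
  obtain u u' W t0 where u: "0 < u" "u < u_minus (a + b)" and u': "u_plus (a + b) < u'" "u' \<le> 1"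
    and solW: "mf_solution a b M W" and W0: "\<forall>x. W 0 x = (if x < 0 then u' else u)"
    and t0: "0 < t0" and Wt: "W t0 (-1) = u"
    using retreat r unfolding retreat_def by auto
  obtain T1 where T1: "0 \<le> T1"
    and below: "\<forall>v t x. mf_solution a b M v \<longrightarrow> T1 \<le> t \<longrightarrow> v t x \<le> u'"
    using supercritical_eventually_below[OF ab r u'] by blast
  have "u \<le> u'" using u u' u_minus_u_plus[OF r] by linarith
  define \<delta> where "\<delta> = u / 4"
  define lv where "lv = (u + u_minus (a + b)) / 2"
  have \<delta>: "0 < \<delta>" "\<delta> < lv" "\<delta> + \<delta> \<le> u_minus (a + b)" and lv: "u < lv" "lv < u_minus (a + b)"
    using u unfolding \<delta>_def lv_def by auto
  have "0 < lv - u" and lv_eq: "u + (lv - u) = lv" using lv by simp_all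
  from upper_plateau_persists[OF ab r less_imp_le[OF u(1)] less_imp_le[OF u(2)] \<open>0 < lv - u\<close>, of T1,
      unfolded lv_eq]
  obtain R0 where R0: "0 \<le> R0"
    and start: "\<forall>v s K t x. mf_solution a b M v \<longrightarrow> 0 \<le> s \<longrightarrow> (\<forall>y. \<bar>y\<bar> \<le> K \<longrightarrow> v s y \<le> u) \<longrightarrow>
                  t \<in> {0..T1} \<longrightarrow> \<bar>x\<bar> \<le> K - R0 \<longrightarrow> v (s + t) x \<le> lv"
    by blast
  from upper_plateau_sinks[OF ab r \<delta>(1) \<delta>(2) lv(2) \<delta>(1)]
  obtain \<tau> R where \<tau>: "0 < \<tau>" and R: "0 \<le> R"
    and sink: "\<forall>v s K x. mf_solution a b M v \<longrightarrow> 0 \<le> s \<longrightarrow> (\<forall>y. \<bar>y\<bar> \<le> K \<longrightarrow> v s y \<le> lv) \<longrightarrow>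
                 \<bar>x\<bar> \<le> K - R \<longrightarrow> v (s + \<tau>) x \<le> \<delta> + \<delta>"
    by blast
  define N where "N = nat (R + 1)"
  define Tc where "Tc = real N * t0 + \<tau>"
  from upper_plateau_persists[OF ab r _ \<delta>(3) \<delta>(1), of Tc] \<delta>
  obtain R1 where R1: "0 \<le> R1"
    and hold: "\<forall>v s K t x. mf_solution a b M v \<longrightarrow> 0 \<le> s \<longrightarrow> (\<forall>y. \<bar>y\<bar> \<le> K \<longrightarrow> v s y \<le> \<delta> + \<delta>) \<longrightarrow>
                 t \<in> {0..Tc} \<longrightarrow> \<bar>x\<bar> \<le> K - R1 \<longrightarrow> v (s + t) x \<le> \<delta> + \<delta> + \<delta>"
    by auto
  define Q where "Q = 2 * exp (comparison_rate a b M * t0)"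
  define \<zeta> where "\<zeta> = (lv - u) / Q ^ N"
  have "1 \<le> exp (comparison_rate a b M * t0)" using comparison_rate_pos[OF ab(1,2), of M] t0 by simp
  then have Q: "1 \<le> Q" unfolding Q_def by linarith
  then have \<zeta>: "0 < \<zeta>" "- lv \<le> - u - Q ^ N * \<zeta>" unfolding \<zeta>_def using lv by auto
  obtain K0 :: int where K0: "1 \<le> K0" "exp (- real_of_int K0) \<le> \<zeta>"
    using exists_exp_tail_le[of 1 \<zeta>] \<zeta> by auto
  have "spreads_below a b M u (K0 + R + R0) ((T1 + \<tau>) / Tc + R1 + 1) \<delta> (1 / Tc)"
    unfolding spreads_below_def
  proof (intro allI impI)
    fix v t x
    assume sol: "mf_solution a b M v"
      and init: "\<forall>x. \<bar>real_of_int x\<bar> \<le> real_of_int (K0 + R + R0) \<longrightarrow> v 0 x \<le> u"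
      and x: "\<bar>real_of_int x\<bar> \<le> 1 / Tc * t - ((T1 + \<tau>) / Tc + real_of_int R1 + 1)"
    have "\<forall>y. \<bar>y\<bar> \<le> K0 + R + R0 \<longrightarrow> v 0 y \<le> u"
      using init by (metis of_int_abs of_int_le_iff)
    then have "\<forall>y. \<bar>y\<bar> \<le> K0 + R \<longrightarrow> v T1 y \<le> lv" using start sol T1 by fastforce
    then have init': "\<forall>y. \<bar>y\<bar> \<le> K0 \<longrightarrow> - (\<delta> + \<delta>) \<le> - v (T1 + \<tau>) y"
      using sink sol T1 by fastforce
    have "- (\<delta> + \<delta> + \<delta>) \<le> - v t x"
    proof (rule spreading_by_cycles[where g = "\<lambda>t x. - v t x" and lo = "- u" and lv = "- lv",
          OF less_imp_le[OF t0] \<tau> Tc_def _ \<zeta>(1) Q _ _ _ \<zeta>(2) _ init' _ R1 x])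
      show "int N = R + 1" unfolding N_def using R by simp
      show "\<forall>s\<ge>T1 + \<tau>. \<forall>p\<ge>K0. \<forall>\<eta>\<ge>\<zeta>. (\<forall>x. \<bar>x\<bar> \<le> p \<longrightarrow> - u - \<eta> \<le> - v s x) \<longrightarrow>
              (\<forall>x. \<bar>x\<bar> \<le> p + 1 \<longrightarrow> - u - Q * \<eta> \<le> - v (s + t0) x)"
      proof (intro allI impI)
        fix s p \<eta> x
        assume s: "T1 + \<tau> \<le> s" and p: "K0 \<le> p" and \<eta>: "\<zeta> \<le> \<eta>"
          and plateau: "\<forall>x. \<bar>x\<bar> \<le> p \<longrightarrow> - u - \<eta> \<le> - v s x" and x: "\<bar>x\<bar> \<le> p + 1"
        have "exp (- real_of_int p) \<le> exp (- real_of_int K0)" using p by simp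
        then have "exp (- real_of_int p) \<le> \<eta>" using K0(2) \<eta> by linarith
        moreover have "\<forall>x. \<bar>x\<bar> \<le> p \<longrightarrow> v s x \<le> u + \<eta>" using plateau by force
        moreover have "\<forall>y. v s y \<le> u'" using below sol s \<tau> by force
        moreover have "0 \<le> s" using s \<tau> T1 by linarith
        ultimately show "- u - Q * \<eta> \<le> - v (s + t0) x"
          using retreat_step[OF ab sol solW W0 Wt less_imp_le[OF t0] \<open>u \<le> u'\<close> _ _ _ _ x]
          unfolding Q_def by force
      qed
      show "\<forall>s\<ge>T1 + \<tau>. \<forall>K\<ge>K0. (\<forall>x. \<bar>x\<bar> \<le> K \<longrightarrow> - lv \<le> - v s x) \<longrightarrow>
              (\<forall>x. \<bar>x\<bar> \<le> K - R \<longrightarrow> - (\<delta> + \<delta>) \<le> - v (s + \<tau>) x)"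
        using sink sol \<tau> T1 by fastforce
      show "\<forall>s\<ge>T1 + \<tau>. \<forall>K. (\<forall>x. \<bar>x\<bar> \<le> K \<longrightarrow> - (\<delta> + \<delta>) \<le> - v s x) \<longrightarrow>
              (\<forall>t\<in>{0..Tc}. \<forall>x. \<bar>x\<bar> \<le> K - R1 \<longrightarrow> - (\<delta> + \<delta> + \<delta>) \<le> - v (s + t) x)"
        using hold sol \<tau> T1 by fastforce
    qed (use \<zeta> \<delta> K0 in \<open>auto simp: \<delta>_def\<close>)
    then show "v t x \<le> u - \<delta>" unfolding \<delta>_def by simp
  qed
  moreover have "0 < Tc" unfolding Tc_def using t0 \<tau> by (simp add: add_nonneg_pos)
  ultimately show ?thesis using u \<delta> K0 R R0 R1 \<tau> T1
    by (intro exI[of _ u] exI[of _ "real_of_int (K0 + R + R0)"] exI[of _ "(T1 + \<tau>) / Tc + R1 + 1"]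
        exI[of _ \<delta>] exI[of _ "1 / Tc"]) (auto simp: add_pos_nonneg)
qed

theorem theorem2p1:
  fixes a b :: real and M :: nat
  assumes "a > 0" and "b > 0" and "M \<ge> 1"
  shows "(expansion a b M \<longrightarrow>
           (\<exists>u L x0 \<delta> c. u > 0 \<and> L > 0 \<and> x0 > 0 \<and> \<delta> > 0 \<and> c > 0 \<and>
              u_minus (a+b) < u \<and> u < u_plus (a+b) \<and>
              (\<forall>sol. mf_solution a b M sol \<longrightarrow>
                 (\<forall>x. \<bar>real_of_int x\<bar> \<le> L \<longrightarrow> sol 0 x \<ge> u) \<longrightarrow>
                 (\<forall>t>0. \<forall>x. \<bar>real_of_int x\<bar> \<le> c * t - x0 \<longrightarrow> sol t x \<ge> u + \<delta>))))
       \<and> (retreat a b M \<longrightarrow>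
           (\<exists>u L x0 \<delta> c. u > 0 \<and> L > 0 \<and> x0 > 0 \<and> \<delta> > 0 \<and> c > 0 \<and>
              (a + b \<ge> 4 \<longrightarrow> u < u_minus (a+b)) \<and>
              (\<forall>sol. mf_solution a b M sol \<longrightarrow>
                 (\<forall>x. \<bar>real_of_int x\<bar> \<le> L \<longrightarrow> sol 0 x \<le> u) \<longrightarrow>
                 (\<forall>t>0. \<forall>x. \<bar>real_of_int x\<bar> \<le> c * t - x0 \<longrightarrow> sol t x \<le> u - \<delta>))))"
proof -
  have ab: "0 \<le> a" "0 \<le> b" using assms by auto
  have retreat: "\<exists>u L x0 \<delta> c. 0 < u \<and> 0 < L \<and> 0 < x0 \<and> 0 < \<delta> \<and> 0 < c \<and>
      (4 \<le> a + b \<longrightarrow> u < u_minus (a + b)) \<and> spreads_below a b M u L x0 \<delta> c" if "retreat a b M"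
  proof (cases "4 \<le> a + b")
    case True
    then show ?thesis using retreat_spreads_below[OF ab assms(3) True that] by blast
  next
    case False
    then obtain x0 where "0 < x0" "spreads_below a b M (1/2) 1 x0 (1/4) 1"
      using subcritical_spreads_below[OF ab assms(3)] by auto
    then show ?thesis using False by (intro exI[of _ "1/2"] exI[of _ 1] exI[of _ x0] exI[of _ "1/4"]) auto
  qed
  show ?thesis
    unfolding spreads_above_def[symmetric] spreads_below_def[symmetric]
    using expansion_spreads_above[OF ab assms(3)] retreat by blast
qed

end
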